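(* Let $d\in\{2,3\}$, let $K$ be a $C^{1,1}$ potential with $H\coloneqq\|D^2K\|_\infty<\infty$, let $B=(0,0,\omega)$ with $\omega>0$, and let $f_1,f_2$ be two solutions of the magnetized Vlasov equation (VB). Then for all $t\ge0$: if $d=2$, $$W_1(f_1(t),f_2(t))\le \min\Big(\Big(\sqrt{\tfrac{2(1-\cos(\omega t))}{\omega^2}}+1\Big)e^{4H\left(\frac{2(t-\sin(\omega t)/\omega)}{\omega^2}+t\right)},\ e^{(1+2H)t}\Big)\,W_1(f_1(0),f_2(0));$$ if $d=3$, $$W_1(f_1(t),f_2(t))\le \min\Big(\Big(\sqrt{\tfrac{2(1-\cos(\omega t))}{\omega^2}+t^2}+1\Big)e^{4H\left(\frac{2(t-\sin(\omega t)/\omega)}{\omega^2}+\frac{t^3}{3}+t\right)},\ e^{(1+2H)t}\Big)\,W_1(f_1(0),f_2(0)).$$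
   Context: The magnetized Vlasov equation (VB) on $\mathbb{T}^d\times\mathbb{R}^d$ is $\partial_tf+v\cdot\nabla_xf+(F[f]+v\wedge B)\cdot\nabla_vf=0$ with $F[f]=\nabla(K\ast\rho_f)$, $\rho_f=\int f\,dv$, and $f(0)$ a probability density; for $d=2$, $v\wedge B$ is computed with $v$ embedded in $\mathbb{R}^3$, giving $(\omega v_2,-\omega v_1)$. $W_1(\mu,\nu)=\inf_{\pi\in\Pi(\mu,\nu)}\int(|x-y|+|v-w|)\,d\pi(x,v,y,w)$, $\Pi(\mu,\nu)$ the set of couplings. *)

theory Defs
  imports "HOL-Analysis.Analysis" "HOL-Probability.Probability"
begin

text \<open>The torus T^d is R^d modulo the integer lattice Z^d, with fundamental
  domain [0,1)^d.  Phase space points are pairs (x,v).\<close>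

definition lattice :: "'a::euclidean_space set" where
  "lattice = {k. \<forall>b\<in>Basis. k \<bullet> b \<in> \<int>}"

definition fund_dom :: "'a::euclidean_space set" where
  "fund_dom = {x. \<forall>b\<in>Basis. 0 \<le> x \<bullet> b \<and> x \<bullet> b < 1}"

definition tor :: "'a::euclidean_space \<Rightarrow> 'a" where
  "tor x = (\<Sum>b\<in>Basis. frac (x \<bullet> b) *\<^sub>R b)"

definition tdist :: "'a::euclidean_space \<Rightarrow> 'a \<Rightarrow> real" where
  "tdist x y = (INF k\<in>lattice. norm (x - y - k))"

definition periodic :: "('a::euclidean_space \<Rightarrow> 'b) \<Rightarrow> bool" where
  "periodic K \<longleftrightarrow> (\<forall>x k. k \<in> lattice \<longrightarrow> K (x + k) = K x)"

definition cost :: "('a::euclidean_space \<times> 'a) \<Rightarrow> ('a \<times> 'a) \<Rightarrow> real" where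
  "cost z z' = tdist (fst z) (fst z') + norm (snd z - snd z')"

definition couplings ::
  "('a::euclidean_space \<times> 'a) measure \<Rightarrow> ('a \<times> 'a) measure \<Rightarrow> (('a \<times> 'a) \<times> ('a \<times> 'a)) measure set" where
  "couplings \<mu> \<nu> = {\<pi>. prob_space \<pi> \<and> sets \<pi> = sets borel \<and>
      distr \<pi> borel fst = \<mu> \<and> distr \<pi> borel snd = \<nu>}"

definition W1 :: "('a::euclidean_space \<times> 'a) measure \<Rightarrow> ('a \<times> 'a) measure \<Rightarrow> ennreal" where
  "W1 \<mu> \<nu> = (INF \<pi>\<in>couplings \<mu> \<nu>. \<integral>\<^sup>+ p. ennreal (cost (fst p) (snd p)) \<partial>\<pi>)"

text \<open>Mean field F[f](x) = \<nabla>(K * \<rho>_f)(x) = \<integral> \<nabla>K(x - y) d\<rho>_f(y), where G = \<nabla>K.\<close>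
definition force :: "('a::euclidean_space \<Rightarrow> 'a) \<Rightarrow> ('a \<times> 'a) measure \<Rightarrow> 'a \<Rightarrow> 'a" where
  "force G \<mu> x = (\<integral> z. G (x - fst z) \<partial>\<mu>)"

text \<open>Magnetic terms v \<wedge> B for B = (0,0,\<omega>).\<close>
definition mag2 :: "real \<Rightarrow> real \<times> real \<Rightarrow> real \<times> real" where
  "mag2 \<omega> v = (\<omega> * snd v, - \<omega> * fst v)"

definition mag3 :: "real \<Rightarrow> real \<times> real \<times> real \<Rightarrow> real \<times> real \<times> real" where
  "mag3 \<omega> v = (\<omega> * fst (snd v), - \<omega> * fst v, 0)"

text \<open>(Lagrangian / characteristic) measure solution of the magnetized Vlasov
  equation on T^d x R^d: \<mu> t is the law at time t, obtained by transporting
  the initial probability measure \<mu> 0 (on [0,1)^d x R^d) along characteristics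
  X' = V, V' = F[\<mu> t](X) + V \<wedge> B  (positions lifted to R^d, reduced mod 1).\<close>
definition vb_solution ::
  "('a::euclidean_space \<Rightarrow> 'a) \<Rightarrow> ('a \<Rightarrow> 'a) \<Rightarrow> (real \<Rightarrow> ('a \<times> 'a) measure) \<Rightarrow> bool" where
  "vb_solution G mag \<mu> \<longleftrightarrow>
     prob_space (\<mu> 0) \<and> sets (\<mu> 0) = sets borel \<and>
     emeasure (\<mu> 0) (fund_dom \<times> UNIV) = 1 \<and>
     (\<exists>Z :: real \<Rightarrow> 'a \<times> 'a \<Rightarrow> 'a \<times> 'a.
        (\<forall>z. Z 0 z = z) \<and>
        (\<forall>t\<ge>0. Z t \<in> borel_measurable borel) \<and>
        (\<forall>z. \<forall>t\<ge>0. ((\<lambda>s. Z s z) has_vector_derivative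
              (snd (Z t z), force G (\<mu> t) (fst (Z t z)) + mag (snd (Z t z))))
              (at t within {0..})) \<and>
        (\<forall>t\<ge>0. \<mu> t = distr (\<mu> 0) borel (\<lambda>z. (tor (fst (Z t z)), snd (Z t z)))))"

end

theory Submission
  imports Defs
begin

(* Transport a coupling of the initial data along the characteristic flows of the two solutions.
   For a coupled pair of characteristics, the relative position y (shifted by a lattice vector)
   and velocity u satisfy y' = u and u' = f + \<omega> J u, where the force defect obeys
   |f| \<le> H (|y| + D) and D is the mean torus distance of the coupled particles.
   Conjugating with the magnetic rotation R(\<tau>) = exp(\<tau> \<omega> J), whose integral A(\<tau>) has norm
   \<alpha>(\<tau>), Duhamel's formula bounds |y| + |u| with the factor (1 + \<alpha>(t)) exp(4 H \<beta>(t)), where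
   \<beta>' = 1 + \<alpha>\<^sup>2; using only that R is an isometry gives the classical factor exp((1 + 2H) t).
   Either bound is first proved by continuous induction under the a priori assumption that D
   grows at most like the claimed factor; a supremum argument on the integrated cost then
   removes this assumption, and taking the infimum over couplings bounds W1. *)

section \<open>Comparison arguments on the half-line\<close>

definition smooth_norm :: "real \<Rightarrow> 'a::real_inner \<Rightarrow> real" where
  "smooth_norm \<eta> x = sqrt (inner x x + \<eta>\<^sup>2)"

lemma smooth_norm_pos: "0 < \<eta> \<Longrightarrow> 0 < smooth_norm \<eta> x"
  unfolding smooth_norm_def by (simp add: add_nonneg_pos)

lemma norm_le_smooth_norm: "norm x \<le> smooth_norm \<eta> x"
  unfolding smooth_norm_def by (simp add: norm_eq_sqrt_inner)

lemma smooth_norm_le: "0 \<le> \<eta> \<Longrightarrow> smooth_norm \<eta> x \<le> norm x + \<eta>"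
  unfolding smooth_norm_def
  by (rule real_le_lsqrt) (auto simp: power2_sum power2_norm_eq_inner[symmetric])

lemma inner_div_smooth_norm_le: "0 < \<eta> \<Longrightarrow> inner x v / smooth_norm \<eta> x \<le> norm v"
  using norm_cauchy_schwarz[of x v] norm_le_smooth_norm[of x \<eta>] smooth_norm_pos[of \<eta> x]
  by (simp add: divide_le_eq mult.commute) (meson mult_left_mono norm_ge_zero order_trans)

lemma has_real_derivative_smooth_norm:
  assumes "(\<xi> has_vector_derivative \<xi>') (at s)" and "0 < \<eta>"
  shows "((\<lambda>s. smooth_norm \<eta> (\<xi> s)) has_real_derivative inner (\<xi> s) \<xi>' / smooth_norm \<eta> (\<xi> s)) (at s)"
proof -
  have "((\<lambda>s. inner (\<xi> s) (\<xi> s) + \<eta>\<^sup>2) has_real_derivative 2 * inner (\<xi> s) \<xi>') (at s)"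
    using assms(1) unfolding has_vector_derivative_def has_field_derivative_def
    by (auto intro!: derivative_eq_intros simp: inner_commute algebra_simps)
  from DERIV_chain2[OF DERIV_real_sqrt this] show ?thesis
    using smooth_norm_pos[OF assms(2), of "\<xi> s"] unfolding smooth_norm_def by (simp add: field_simps)
qed

lemma norm_add_norm_le_by_derivative:
  fixes \<phi> \<psi> :: "real \<Rightarrow> 'a::real_inner" and \<Gamma> :: "real \<Rightarrow> real"
  assumes "a \<le> b"
    and cont: "continuous_on {a..b} \<phi>" "continuous_on {a..b} \<psi>" "continuous_on {a..b} \<Gamma>"
    and \<phi>': "\<And>s. s \<in> {a<..<b} \<Longrightarrow> (\<phi> has_vector_derivative \<phi>' s) (at s)"
    and \<psi>': "\<And>s. s \<in> {a<..<b} \<Longrightarrow> (\<psi> has_vector_derivative \<psi>' s) (at s)"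
    and \<Gamma>': "\<And>s. s \<in> {a<..<b} \<Longrightarrow> (\<Gamma> has_real_derivative \<Gamma>' s) (at s)"
    and bound: "\<And>s. s \<in> {a<..<b} \<Longrightarrow> norm (\<phi>' s) + norm (\<psi>' s) \<le> \<Gamma>' s"
  shows "norm (\<phi> b) + norm (\<psi> b) \<le> norm (\<phi> a) + norm (\<psi> a) + (\<Gamma> b - \<Gamma> a)"
proof (rule field_le_epsilon)
  fix e :: real assume "0 < e"
  define \<eta> where "\<eta> = e / 2"
  have \<eta>: "0 < \<eta>" using \<open>0 < e\<close> by (simp add: \<eta>_def)
  \<comment> \<open>The norm is not differentiable at 0, but its smoothed version is.\<close>
  define k where "k s = smooth_norm \<eta> (\<phi> s) + smooth_norm \<eta> (\<psi> s) - \<Gamma> s" for s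
  have "k b \<le> k a"
  proof (rule DERIV_nonpos_imp_decreasing_open[OF \<open>a \<le> b\<close>])
    fix s assume "a < s" "s < b"
    then have s: "s \<in> {a<..<b}" by simp
    have "(k has_real_derivative inner (\<phi> s) (\<phi>' s) / smooth_norm \<eta> (\<phi> s)
        + inner (\<psi> s) (\<psi>' s) / smooth_norm \<eta> (\<psi> s) - \<Gamma>' s) (at s)"
      unfolding k_def
      by (intro DERIV_diff DERIV_add has_real_derivative_smooth_norm \<phi>'[OF s] \<psi>'[OF s] \<Gamma>'[OF s] \<eta>)
    moreover have "inner (\<phi> s) (\<phi>' s) / smooth_norm \<eta> (\<phi> s)
        + inner (\<psi> s) (\<psi>' s) / smooth_norm \<eta> (\<psi> s) - \<Gamma>' s \<le> 0"
      using inner_div_smooth_norm_le[OF \<eta>, of "\<phi> s" "\<phi>' s"] inner_div_smooth_norm_le[OF \<eta>, of "\<psi> s" "\<psi>' s"]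
        bound[OF s] by linarith
    ultimately show "\<exists>y. (k has_real_derivative y) (at s) \<and> y \<le> 0" by blast
  next
    show "continuous_on {a..b} k"
      unfolding k_def smooth_norm_def by (intro continuous_intros cont)
  qed
  then show "norm (\<phi> b) + norm (\<psi> b) \<le> norm (\<phi> a) + norm (\<psi> a) + (\<Gamma> b - \<Gamma> a) + e"
    using norm_le_smooth_norm[of "\<phi> b" \<eta>] norm_le_smooth_norm[of "\<psi> b" \<eta>]
      smooth_norm_le[of \<eta> "\<phi> a"] smooth_norm_le[of \<eta> "\<psi> a"] \<eta>
    unfolding k_def \<eta>_def by linarith
qed

lemma continuous_on_halfline_derivative:
  assumes "\<And>s. 0 \<le> s \<Longrightarrow> (g has_vector_derivative g' s) (at s within {0..})"
  shows "continuous_on {0..t} g"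
proof -
  have "continuous_on {0..} g"
    unfolding continuous_on_eq_continuous_within
    using assms has_vector_derivative_continuous by blast
  then show ?thesis by (rule continuous_on_subset) auto
qed

lemma has_vector_derivative_halfline_at:
  assumes "\<And>s. 0 \<le> s \<Longrightarrow> (g has_vector_derivative g' s) (at s within {0..})" and "0 < s"
  shows "(g has_vector_derivative g' s) (at s)"
proof -
  have "at s within {0..} = at s" using \<open>0 < s\<close> by (intro at_within_interior) simp
  then show ?thesis using assms(1)[of s] \<open>0 < s\<close> by simp
qed

lemma le_by_continuous_induction:
  fixes c \<Psi> :: "real \<Rightarrow> real"
  assumes cont: "continuous_on {0..T} c" "continuous_on {0..T} \<Psi>"
    and step: "\<And>t. t \<in> {0..T} \<Longrightarrow> (\<And>s. s \<in> {0..<t} \<Longrightarrow> c s \<le> \<Psi> s) \<Longrightarrow> c t < \<Psi> t"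
    and t: "t \<in> {0..T}"
  shows "c t \<le> \<Psi> t"
proof (rule ccontr)
  assume "\<not> c t \<le> \<Psi> t"
  define B where "B = {s \<in> {0..T}. \<Psi> s < c s}"
  have "t \<in> B" using t \<open>\<not> c t \<le> \<Psi> t\<close> by (auto simp: B_def)
  have bdd: "bdd_below B" unfolding B_def by (rule bdd_belowI[of _ 0]) auto
  define m where "m = Inf B"
  have m: "m \<in> {0..T}"
    using cInf_lower[OF \<open>t \<in> B\<close> bdd] cInf_greatest[of B 0] \<open>t \<in> B\<close> t
    unfolding m_def B_def by fastforce
  have "c s \<le> \<Psi> s" if "s \<in> {0..<m}" for s
  proof (rule ccontr)
    assume "\<not> c s \<le> \<Psi> s"
    then have "s \<in> B" using that m by (auto simp: B_def)
    then show False using cInf_lower[OF _ bdd, of s] that unfolding m_def by simp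
  qed
  then have gap: "\<Psi> m - c m > 0" using step[OF m] by simp
  have "continuous_on {0..T} (\<lambda>s. \<Psi> s - c s)" by (intro continuous_intros cont)
  then obtain d where "d > 0"
    and d: "\<And>s. s \<in> {0..T} \<Longrightarrow> dist s m < d \<Longrightarrow> dist (\<Psi> s - c s) (\<Psi> m - c m) < \<Psi> m - c m"
    using m gap unfolding continuous_on_iff by blast
  obtain b where b: "b \<in> B" "b < m + d"
    using cInf_less_iff[OF _ bdd, of "m + d"] \<open>t \<in> B\<close> \<open>d > 0\<close> unfolding m_def by auto
  have "m \<le> b" unfolding m_def using b(1) bdd by (rule cInf_lower)
  then have "dist (\<Psi> b - c b) (\<Psi> m - c m) < \<Psi> m - c m"
    using d[of b] b by (auto simp: B_def dist_real_def)
  then show False using b(1) by (auto simp: B_def dist_real_def)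
qed

lemma le_affine_of_slack:
  fixes c a b x :: real
  assumes "\<And>\<epsilon>. 0 < \<epsilon> \<Longrightarrow> c \<le> a * (x + \<epsilon>) + b" and "0 < a"
  shows "c \<le> a * x + b"
proof (rule field_le_epsilon)
  fix e :: real assume "0 < e"
  then show "c \<le> a * x + b + e"
    using assms(1)[of "e / a"] \<open>0 < a\<close> by (simp add: distrib_left)
qed

section \<open>The torus distance\<close>

lemma lattice_zero [simp]: "0 \<in> lattice"
  unfolding lattice_def by simp

lemma lattice_add: "a \<in> lattice \<Longrightarrow> b \<in> lattice \<Longrightarrow> a + b \<in> lattice"
  unfolding lattice_def by (auto simp: inner_add_left)

lemma lattice_diff: "a \<in> lattice \<Longrightarrow> b \<in> lattice \<Longrightarrow> a - b \<in> lattice"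
  unfolding lattice_def by (auto simp: inner_diff_left Ints_diff)

lemma diff_tor_lattice: "x - tor x \<in> lattice"
proof -
  have "x - tor x = (\<Sum>b\<in>Basis. (x \<bullet> b) *\<^sub>R b) - (\<Sum>b\<in>Basis. frac (x \<bullet> b) *\<^sub>R b)"
    unfolding tor_def by (simp add: euclidean_representation)
  also have "\<dots> = (\<Sum>b\<in>Basis. of_int \<lfloor>x \<bullet> b\<rfloor> *\<^sub>R b)"
    by (simp add: sum_subtractf[symmetric] scaleR_diff_left frac_def)
  finally show ?thesis
    unfolding lattice_def by (simp add: inner_sum_left inner_Basis if_distrib cong: if_cong)
qed

lemma norm_tor_le: "norm (tor x) \<le> real DIM('a)" for x :: "'a::euclidean_space"
proof -
  have "norm (tor x) \<le> (\<Sum>b\<in>Basis. norm (frac (x \<bullet> b) *\<^sub>R b))"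
    unfolding tor_def by (rule norm_sum)
  also have "\<dots> \<le> (\<Sum>b\<in>(Basis::'a set). 1)"
    by (intro sum_mono) (auto simp: frac_lt_1 less_imp_le)
  finally show ?thesis by simp
qed

lemma tdist_le: "k \<in> lattice \<Longrightarrow> tdist x y \<le> norm (x - y - k)"
  unfolding tdist_def by (rule cINF_lower) (auto intro: bdd_belowI[of _ 0])

lemma tdist_greatest: "(\<And>k. k \<in> lattice \<Longrightarrow> c \<le> norm (x - y - k)) \<Longrightarrow> c \<le> tdist x y"
  unfolding tdist_def by (rule cINF_greatest) (use lattice_zero in blast)+

lemma tdist_nonneg: "0 \<le> tdist x y"
  by (rule tdist_greatest) simp

lemma tdist_le_DIM: "tdist x y \<le> real DIM('a)" for x y :: "'a::euclidean_space"
  using tdist_le[OF diff_tor_lattice[of "x - y"], of x y] norm_tor_le[of "x - y"] by simp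

lemma le_tdist_affine:
  assumes "a > 0" and "\<And>k. k \<in> lattice \<Longrightarrow> C \<le> a * (norm (x - y - k) + v) + b"
  shows "C \<le> a * (tdist x y + v) + b"
proof -
  have "(C - b) / a - v \<le> tdist x y"
    using assms by (intro tdist_greatest) (simp add: divide_le_eq algebra_simps)
  then show ?thesis using assms(1) by (simp add: divide_le_eq algebra_simps)
qed

lemma tdist_add_le_of_lattice:
  assumes "0 < a"
    and "\<And>k. k \<in> lattice \<Longrightarrow> norm (x - y - k) + v \<le> a * (norm (x0 - y0 - k) + v0) + b"
  shows "tdist x y + v \<le> a * (tdist x0 y0 + v0) + b"
  using assms tdist_le by (intro le_tdist_affine) (fastforce intro: order_trans[rotated])+

lemma tdist_lattice_shift:
  fixes x y k1 k2 :: "'a::euclidean_space"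
  assumes "k1 \<in> lattice" "k2 \<in> lattice"
  shows "tdist (x - k1) (y - k2) = tdist x y"
proof (rule antisym)
  show "tdist (x - k1) (y - k2) \<le> tdist x y"
  proof (rule tdist_greatest)
    fix k :: 'a assume "k \<in> lattice"
    then have "tdist (x - k1) (y - k2) \<le> norm (x - k1 - (y - k2) - (k - k1 + k2))"
      using assms by (intro tdist_le lattice_add lattice_diff)
    then show "tdist (x - k1) (y - k2) \<le> norm (x - y - k)" by (simp add: algebra_simps)
  qed
  show "tdist x y \<le> tdist (x - k1) (y - k2)"
  proof (rule tdist_greatest)
    fix k :: 'a assume "k \<in> lattice"
    then have "tdist x y \<le> norm (x - y - (k + k1 - k2))"
      using assms by (intro tdist_le lattice_add lattice_diff)
    then show "tdist x y \<le> norm (x - k1 - (y - k2) - k)" by (simp add: algebra_simps)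
  qed
qed

lemma tdist_tor [simp]: "tdist (tor x) (tor y) = tdist x y"
  using tdist_lattice_shift[OF diff_tor_lattice[of x] diff_tor_lattice[of y], of x y] by simp

lemma tdist_le_tdist_add: "tdist x y \<le> tdist x' y' + norm (x - x') + norm (y - y')"
  for x y x' y' :: "'a::euclidean_space"
proof -
  have "tdist x y - norm (x - x') - norm (y - y') \<le> tdist x' y'"
  proof (rule tdist_greatest)
    fix k :: 'a assume "k \<in> lattice"
    have "norm (x - y - k) \<le> norm (x' - y' - k) + norm (x - x') + norm (y - y')"
      using norm_triangle_ineq4[of "x' - y' - k + (x - x')" "y - y'"]
        norm_triangle_ineq[of "x' - y' - k" "x - x'"]
      by (simp add: algebra_simps)
    then show "tdist x y - norm (x - x') - norm (y - y') \<le> norm (x' - y' - k)"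
      using tdist_le[OF \<open>k \<in> lattice\<close>, of x y] by simp
  qed
  then show ?thesis by simp
qed

lemma continuous_on_tdist: "continuous_on UNIV (\<lambda>z::'a::euclidean_space \<times> 'a. tdist (fst z) (snd z))"
proof (rule lipschitz_on_continuous_on)
  show "2-lipschitz_on UNIV (\<lambda>z::'a \<times> 'a. tdist (fst z) (snd z))"
  proof (rule lipschitz_onI)
    fix z w :: "'a \<times> 'a"
    have "norm (fst z - fst w) \<le> dist z w" "norm (snd z - snd w) \<le> dist z w"
      by (metis dist_fst_le dist_norm, metis dist_snd_le dist_norm)
    then show "dist (tdist (fst z) (snd z)) (tdist (fst w) (snd w)) \<le> 2 * dist z w"
      using tdist_le_tdist_add[of "fst z" "snd z" "fst w" "snd w"]
        tdist_le_tdist_add[of "fst w" "snd w" "fst z" "snd z"]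
      by (simp add: dist_real_def abs_le_iff norm_minus_commute)
  qed simp
qed

lemma borel_measurable_tdist [measurable]:
  "(\<lambda>z::'a::euclidean_space \<times> 'a. tdist (fst z) (snd z)) \<in> borel_measurable borel"
  by (rule borel_measurable_continuous_onI[OF continuous_on_tdist])

lemma borel_measurable_tdist' [measurable (raw)]:
  "f \<in> borel_measurable M \<Longrightarrow> g \<in> borel_measurable M \<Longrightarrow> (\<lambda>x. tdist (f x) (g x)) \<in> borel_measurable M"
  using measurable_compose[OF borel_measurable_Pair borel_measurable_tdist] by simp

lemma borel_measurable_tor [measurable]: "tor \<in> borel_measurable borel"
  unfolding tor_def frac_def by measurable

lemma integrable_tdist:
  fixes A B :: "'q \<Rightarrow> 'a::euclidean_space"
  assumes "finite_measure \<pi>" and [measurable]: "A \<in> borel_measurable \<pi>" "B \<in> borel_measurable \<pi>"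
  shows "integrable \<pi> (\<lambda>q. tdist (A q) (B q))"
  by (rule finite_measure.integrable_const_bound[OF assms(1), where B = "real DIM('a)"])
    (auto simp: tdist_nonneg tdist_le_DIM)

lemma borel_measurable_fst_comp [measurable (raw)]:
  "f \<in> borel_measurable M \<Longrightarrow> (\<lambda>x. fst (f x)) \<in> borel_measurable M"
  by (rule measurable_compose[OF _ borel_measurable_continuous_onI[OF continuous_on_fst[OF continuous_on_id]]])

lemma borel_measurable_snd_comp [measurable (raw)]:
  "f \<in> borel_measurable M \<Longrightarrow> (\<lambda>x. snd (f x)) \<in> borel_measurable M"
  by (rule measurable_compose[OF _ borel_measurable_continuous_onI[OF continuous_on_snd[OF continuous_on_id]]])

section \<open>Periodic potentials and the mean field force\<close>

lemma periodic_gradient: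
  fixes K :: "'a::euclidean_space \<Rightarrow> real"
  assumes per: "periodic K" and grad: "\<forall>x. GDERIV K x :> G x" and k: "k \<in> lattice"
  shows "G (x + k) = G x"
proof -
  have shift: "((\<lambda>z. z + k) has_derivative (\<lambda>h. h)) (at x)"
    by (auto intro!: derivative_eq_intros)
  have "(K has_derivative (\<lambda>h. inner h (G (x + k)))) (at (x + k))"
    using grad unfolding gderiv_def by blast
  from has_derivative_compose[OF shift this]
  have "((\<lambda>z. K (z + k)) has_derivative (\<lambda>h. inner h (G (x + k)))) (at x)"
    by simp
  moreover have "(\<lambda>z. K (z + k)) = K"
    using per k unfolding periodic_def by auto
  moreover have "(K has_derivative (\<lambda>h. inner h (G x))) (at x)"
    using grad unfolding gderiv_def by blast
  ultimately have "inner h (G (x + k)) = inner h (G x)" for h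
    using has_derivative_unique by metis
  from this[of "G (x + k) - G x"]
  have "inner (G (x + k) - G x) (G (x + k) - G x) = 0"
    by (simp only: inner_diff_right)
  then show ?thesis by simp
qed

lemma lipschitz_const_nonneg:
  fixes G :: "'a::euclidean_space \<Rightarrow> 'b::real_normed_vector"
  assumes "\<forall>x y. norm (G x - G y) \<le> H * norm (x - y)"
  shows "0 \<le> H"
proof -
  obtain b :: 'a where "b \<in> Basis" using nonempty_Basis by blast
  have "0 \<le> H * norm (b - 0)" using assms norm_ge_zero order_trans by blast
  then show ?thesis using \<open>b \<in> Basis\<close> by simp
qed

lemma borel_measurable_lipschitz:
  fixes G :: "'a::euclidean_space \<Rightarrow> 'b::euclidean_space"
  assumes "\<forall>x y. norm (G x - G y) \<le> H * norm (x - y)"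
  shows "G \<in> borel_measurable borel"
proof -
  have "H-lipschitz_on UNIV G"
    using assms lipschitz_const_nonneg[OF assms] by (intro lipschitz_onI) (auto simp: dist_norm)
  then show ?thesis by (intro borel_measurable_continuous_onI lipschitz_on_continuous_on)
qed

context
  fixes K :: "'a::euclidean_space \<Rightarrow> real" and G :: "'a \<Rightarrow> 'a" and H :: real
  assumes per: "periodic K" and grad: "\<forall>x. GDERIV K x :> G x"
    and lip: "\<forall>x y. norm (G x - G y) \<le> H * norm (x - y)"
begin

lemma periodic_gradient_tor: "G (x - tor y) = G (x - y)"
  using periodic_gradient[OF per grad diff_tor_lattice[of y], of "x - y"] by simp

lemma norm_periodic_gradient_le: "norm (G x) \<le> norm (G 0) + H * real DIM('a)"
proof -
  have "G (0 - tor (- x)) = G x"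
    using periodic_gradient_tor[of 0 "- x"] by simp
  then have "norm (G x - G 0) \<le> H * norm (tor (- x))"
    using lip[rule_format, of "- tor (- x)" 0] by simp
  also have "\<dots> \<le> H * real DIM('a)"
    using lipschitz_const_nonneg[OF lip] norm_tor_le by (rule mult_left_mono[rotated])
  finally show ?thesis using norm_triangle_ineq2[of "G x" "G 0"] by simp
qed

lemma norm_periodic_gradient_diff_le:
  assumes k: "k \<in> lattice"
  shows "norm (G (x1 - a) - G (x2 - b)) \<le> H * norm (x1 - x2 - k) + H * tdist a b"
proof -
  have H: "0 \<le> H" by (rule lipschitz_const_nonneg[OF lip])
  have shifted: "norm (G (x1 - a) - G (x2 - b)) \<le> H * (norm (a - b - j) + norm (x1 - x2 - k))"
    if j: "j \<in> lattice" for j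
  proof -
    define D where "D = (x1 - x2 - k) - (a - b - j)"
    have "G (x2 - b) = G (x2 - b + (k - j))"
      using periodic_gradient[OF per grad lattice_diff[OF k j]] by simp
    also have "x2 - b + (k - j) = (x1 - a) - D"
      unfolding D_def by (simp add: algebra_simps)
    finally have "norm (G (x1 - a) - G (x2 - b)) \<le> H * norm ((x1 - a) - ((x1 - a) - D))"
      using lip[rule_format, of "x1 - a" "x1 - a - D"] by simp
    also have "\<dots> = H * norm ((x1 - x2 - k) - (a - b - j))"
      unfolding D_def by (simp add: algebra_simps)
    also have "\<dots> \<le> H * (norm (a - b - j) + norm (x1 - x2 - k))"
      using H norm_triangle_ineq4[of "x1 - x2 - k" "a - b - j"] by (simp add: mult_left_mono add.commute)
    finally show ?thesis .
  qed
  show ?thesis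
  proof (cases "H = 0")
    case True
    then show ?thesis using shifted[OF lattice_zero] by simp
  next
    case False
    then have "norm (G (x1 - a) - G (x2 - b)) \<le> H * (tdist a b + norm (x1 - x2 - k)) + 0"
      using H shifted by (intro le_tdist_affine) auto
    then show ?thesis by (simp add: algebra_simps)
  qed
qed

lemma force_distr_tor:
  fixes \<pi> :: "'q measure" and \<Phi> :: "'a \<times> 'a \<Rightarrow> 'a \<times> 'a"
  assumes [measurable]: "\<Phi> \<in> borel_measurable borel" "pr \<in> measurable \<pi> borel"
  shows "force G (distr (distr \<pi> borel pr) borel (\<lambda>z. (tor (fst (\<Phi> z)), snd (\<Phi> z)))) x
    = (\<integral>q. G (x - fst (\<Phi> (pr q))) \<partial>\<pi>)"
proof -
  note borel_measurable_lipschitz[OF lip, measurable]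
  define \<Psi> where "\<Psi> z = (tor (fst (\<Phi> z)), snd (\<Phi> z))" for z
  have [measurable]: "\<Psi> \<in> borel_measurable borel"
    unfolding \<Psi>_def by measurable
  have "force G (distr (distr \<pi> borel pr) borel \<Psi>) x = (\<integral>w. G (x - fst w) \<partial>distr \<pi> borel (\<Psi> \<circ> pr))"
    unfolding force_def by (subst distr_distr) auto
  also have "\<dots> = (\<integral>q. G (x - tor (fst (\<Phi> (pr q)))) \<partial>\<pi>)"
    by (subst integral_distr) (auto simp: \<Psi>_def)
  finally show ?thesis
    unfolding \<Psi>_def by (simp add: periodic_gradient_tor)
qed

lemma norm_force_diff_le:
  fixes \<pi> :: "'q measure" and A B :: "'q \<Rightarrow> 'a"
  assumes "prob_space \<pi>" and [measurable]: "A \<in> borel_measurable \<pi>" "B \<in> borel_measurable \<pi>"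
    and k: "k \<in> lattice"
  shows "norm ((\<integral>q. G (x1 - A q) \<partial>\<pi>) - (\<integral>q. G (x2 - B q) \<partial>\<pi>))
     \<le> H * norm (x1 - x2 - k) + H * (\<integral>q. tdist (A q) (B q) \<partial>\<pi>)"
proof -
  interpret prob_space \<pi> by fact
  note borel_measurable_lipschitz[OF lip, measurable]
  have int_G: "integrable \<pi> (\<lambda>q. G (x - C q))" if [measurable]: "C \<in> borel_measurable \<pi>" for x C
    by (rule integrable_const_bound[where B = "norm (G 0) + H * real DIM('a)"])
      (auto simp: norm_periodic_gradient_le)
  have int_tdist: "integrable \<pi> (\<lambda>q. tdist (A q) (B q))"
    by (rule integrable_tdist) (simp_all add: finite_measure_axioms)
  have "norm ((\<integral>q. G (x1 - A q) \<partial>\<pi>) - (\<integral>q. G (x2 - B q) \<partial>\<pi>))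
      = norm (\<integral>q. G (x1 - A q) - G (x2 - B q) \<partial>\<pi>)"
    using int_G by simp
  also have "\<dots> \<le> (\<integral>q. norm (G (x1 - A q) - G (x2 - B q)) \<partial>\<pi>)"
    by (rule integral_norm_bound)
  also have "\<dots> \<le> (\<integral>q. H * norm (x1 - x2 - k) + H * tdist (A q) (B q) \<partial>\<pi>)"
    using int_G int_tdist by (intro integral_mono norm_periodic_gradient_diff_le k) auto
  also have "\<dots> = H * norm (x1 - x2 - k) + H * (\<integral>q. tdist (A q) (B q) \<partial>\<pi>)"
    using int_tdist prob_space by (simp add: lebesgue_integral_const)
  finally show ?thesis .
qed

lemma vb_solution_characteristicsE:
  fixes \<mu> :: "real \<Rightarrow> ('a \<times> 'a) measure" and \<pi> :: "'q measure"
  assumes "vb_solution G mag \<mu>" and "pr \<in> measurable \<pi> borel" and "\<mu> 0 = distr \<pi> borel pr"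
  obtains Z where "\<And>z. Z 0 z = z" "\<And>s. 0 \<le> s \<Longrightarrow> Z s \<in> borel_measurable borel"
    "\<And>z s. 0 \<le> s \<Longrightarrow> ((\<lambda>s. Z s z) has_vector_derivative
      (snd (Z s z), (\<integral>q. G (fst (Z s z) - fst (Z s (pr q))) \<partial>\<pi>) + mag (snd (Z s z)))) (at s within {0..})"
    "\<And>s. 0 \<le> s \<Longrightarrow> \<mu> s = distr (\<mu> 0) borel (\<lambda>z. (tor (fst (Z s z)), snd (Z s z)))"
proof -
  from assms(1) obtain Z where Z: "\<forall>z. Z 0 z = z" "\<forall>t\<ge>0. Z t \<in> borel_measurable borel"
    "\<forall>z. \<forall>t\<ge>0. ((\<lambda>s. Z s z) has_vector_derivative
      (snd (Z t z), force G (\<mu> t) (fst (Z t z)) + mag (snd (Z t z)))) (at t within {0..})"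
    "\<forall>t\<ge>0. \<mu> t = distr (\<mu> 0) borel (\<lambda>z. (tor (fst (Z t z)), snd (Z t z)))"
    unfolding vb_solution_def by (elim conjE exE)
  have force: "force G (\<mu> s) x = (\<integral>q. G (x - fst (Z s (pr q))) \<partial>\<pi>)" if "0 \<le> s" for s x
  proof -
    have "\<mu> s = distr (distr \<pi> borel pr) borel (\<lambda>z. (tor (fst (Z s z)), snd (Z s z)))"
      using Z(4) that assms(3) by simp
    then show ?thesis
      using force_distr_tor[of "Z s" pr \<pi> x] Z(2) that assms(2) by simp
  qed
  show ?thesis
  proof (rule that[of Z])
    fix z and s :: real assume "0 \<le> s"
    then show "((\<lambda>s. Z s z) has_vector_derivative
      (snd (Z s z), (\<integral>q. G (fst (Z s z) - fst (Z s (pr q))) \<partial>\<pi>) + mag (snd (Z s z)))) (at s within {0..})"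
      using Z(3)[rule_format, OF \<open>0 \<le> s\<close>, of z] force[OF \<open>0 \<le> s\<close>, of "fst (Z s z)"] by simp
  qed (use Z in blast)+
qed

end

section \<open>Closing the mean field estimate\<close>

lemma ratio_bootstrap:
  fixes m \<rho> \<theta> :: "real \<Rightarrow> real"
  assumes \<rho>: "\<And>s. s \<in> {0..T} \<Longrightarrow> 0 < \<rho> s"
    and \<theta>: "0 < \<theta> T" "\<And>s. s \<in> {0..T} \<Longrightarrow> \<theta> T \<le> \<theta> s"
    and bounded: "\<And>s. s \<in> {0..T} \<Longrightarrow> m s \<le> B * \<rho> s"
    and step: "\<And>M s. 0 \<le> M \<Longrightarrow> (\<And>s'. s' \<in> {0..T} \<Longrightarrow> m s' \<le> M * \<rho> s') \<Longrightarrow> s \<in> {0..T}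
      \<Longrightarrow> m s \<le> \<rho> s * (\<theta> s * m0 + M * (1 - \<theta> s))"
    and "0 \<le> m0" "0 \<le> T"
  shows "m T \<le> \<rho> T * m0"
proof -
  \<comment> \<open>The step with \<open>M = S\<close> would push the supremum \<open>S\<close> below itself unless \<open>S \<le> m0\<close>.\<close>
  define S where "S = (SUP s\<in>{0..T}. m s / \<rho> s)"
  have bdd: "bdd_above ((\<lambda>s. m s / \<rho> s) ` {0..T})"
    using bounded \<rho> by (intro bdd_aboveI2[of _ _ B]) (simp add: divide_le_eq)
  have le_S: "m s \<le> S * \<rho> s" if "s \<in> {0..T}" for s
  proof -
    have "m s / \<rho> s \<le> S"
      unfolding S_def by (rule cSUP_upper[OF that bdd])
    then show ?thesis using \<rho>[OF that] by (simp add: divide_le_eq)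
  qed
  have "S \<le> m0"
  proof (rule ccontr)
    assume "\<not> S \<le> m0"
    then have "0 \<le> S" and gap: "0 < \<theta> T * (S - m0)"
      using \<open>0 \<le> m0\<close> \<theta>(1) by auto
    have "S \<le> S - \<theta> T * (S - m0)"
      unfolding S_def
    proof (rule cSUP_least)
      show "{0..T} \<noteq> {}" using \<open>0 \<le> T\<close> by simp
      fix s assume s: "s \<in> {0..T}"
      have "m s / \<rho> s \<le> \<theta> s * m0 + S * (1 - \<theta> s)"
        using step[OF \<open>0 \<le> S\<close> le_S s] \<rho>[OF s] by (simp add: divide_le_eq mult.commute)
      also have "\<dots> \<le> S - \<theta> T * (S - m0)"
        using mult_right_mono[OF \<theta>(2)[OF s], of "S - m0"] \<open>\<not> S \<le> m0\<close> by (simp add: algebra_simps)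
      finally show "m s / \<rho> s \<le> (SUP s\<in>{0..T}. m s / \<rho> s) - \<theta> T * ((SUP s\<in>{0..T}. m s / \<rho> s) - m0)"
        unfolding S_def .
    qed
    then show False using gap by simp
  qed
  then show ?thesis
    using le_S[of T] \<rho>[of T] \<open>0 \<le> T\<close> by (simp add: mult.commute order_trans)
qed

lemma nn_integral_le_affine:
  assumes "prob_space \<pi>" and [measurable]: "g \<in> borel_measurable \<pi>" and "\<And>q. 0 \<le> g q"
    and g: "(\<integral>\<^sup>+q. ennreal (g q) \<partial>\<pi>) = ennreal m" "0 \<le> m"
    and "\<And>q. f q \<le> a * g q + b" "0 \<le> a" "0 \<le> b"
  shows "(\<integral>\<^sup>+q. ennreal (f q) \<partial>\<pi>) = ennreal (enn2real (\<integral>\<^sup>+q. ennreal (f q) \<partial>\<pi>))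
    \<and> enn2real (\<integral>\<^sup>+q. ennreal (f q) \<partial>\<pi>) \<le> a * m + b"
proof -
  have "(\<integral>\<^sup>+q. ennreal (f q) \<partial>\<pi>) \<le> (\<integral>\<^sup>+q. ennreal a * ennreal (g q) + ennreal b \<partial>\<pi>)"
    using assms by (intro nn_integral_mono) (simp add: ennreal_leI flip: ennreal_mult ennreal_plus)
  also have "\<dots> = ennreal a * ennreal m + ennreal b"
    using prob_space.emeasure_space_1[OF \<open>prob_space \<pi>\<close>]
    by (simp add: nn_integral_add nn_integral_cmult g)
  also have "\<dots> = ennreal (a * m + b)"
    using assms by (simp add: ennreal_plus ennreal_mult)
  finally have "(\<integral>\<^sup>+q. ennreal (f q) \<partial>\<pi>) \<le> ennreal (a * m + b)" .
  moreover have "0 \<le> a * m + b" using assms by simp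
  ultimately show ?thesis
    by (cases "\<integral>\<^sup>+q. ennreal (f q) \<partial>\<pi>") (simp_all add: top_unique del: ennreal_plus)
qed

lemma nn_integral_bootstrap:
  fixes \<pi> :: "'q measure" and c :: "real \<Rightarrow> 'q \<Rightarrow> real" and D \<rho> \<theta> :: "real \<Rightarrow> real"
  assumes \<pi>: "prob_space \<pi>"
    and c: "\<And>s. 0 \<le> s \<Longrightarrow> c s \<in> borel_measurable \<pi>" "\<And>s q. 0 \<le> s \<Longrightarrow> 0 \<le> c s q"
    and D: "\<And>s. 0 \<le> s \<Longrightarrow> ennreal (D s) \<le> (\<integral>\<^sup>+q. ennreal (c s q) \<partial>\<pi>)"
      "\<And>s. 0 \<le> s \<Longrightarrow> D s \<le> D\<^sub>m\<^sub>a\<^sub>x" "0 \<le> D\<^sub>m\<^sub>a\<^sub>x"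
    and \<rho>: "\<And>s. 0 \<le> s \<Longrightarrow> 1 \<le> \<rho> s"
    and \<theta>: "\<And>s. 0 \<le> s \<Longrightarrow> 0 < \<theta> s" "\<And>s. 0 \<le> s \<Longrightarrow> \<theta> s \<le> 1"
      "\<And>s t. 0 \<le> s \<Longrightarrow> s \<le> t \<Longrightarrow> \<theta> t \<le> \<theta> s"
    and pointwise: "\<And>M t q. 0 \<le> M \<Longrightarrow> 0 \<le> t \<Longrightarrow> (\<And>s. s \<in> {0..t} \<Longrightarrow> D s \<le> M * \<rho> s)
      \<Longrightarrow> c t q \<le> \<rho> t * (\<theta> t * c 0 q + M * (1 - \<theta> t))"
    and t: "0 \<le> t"
  shows "(\<integral>\<^sup>+q. ennreal (c t q) \<partial>\<pi>) \<le> ennreal (\<rho> t) * (\<integral>\<^sup>+q. ennreal (c 0 q) \<partial>\<pi>)"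
proof (cases "(\<integral>\<^sup>+q. ennreal (c 0 q) \<partial>\<pi>) = \<infinity>")
  case True
  then show ?thesis using \<rho>[OF t] by (simp add: ennreal_mult_top)
next
  case False
  then obtain m0 where m0: "(\<integral>\<^sup>+q. ennreal (c 0 q) \<partial>\<pi>) = ennreal m0" "0 \<le> m0"
    by (cases "\<integral>\<^sup>+q. ennreal (c 0 q) \<partial>\<pi>") auto
  define m where "m s = enn2real (\<integral>\<^sup>+q. ennreal (c s q) \<partial>\<pi>)" for s
  have bound: "(\<integral>\<^sup>+q. ennreal (c s q) \<partial>\<pi>) = ennreal (m s) \<and> m s \<le> \<rho> s * (\<theta> s * m0 + M * (1 - \<theta> s))"
    if s: "0 \<le> s" and M: "0 \<le> M" and D_le: "\<And>s'. s' \<in> {0..s} \<Longrightarrow> D s' \<le> M * \<rho> s'" for s M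
  proof -
    have "c s q \<le> \<rho> s * \<theta> s * c 0 q + \<rho> s * M * (1 - \<theta> s)" for q
      using pointwise[OF M s D_le, of q] by (simp add: algebra_simps)
    moreover have "0 \<le> \<rho> s * \<theta> s" "0 \<le> \<rho> s * M * (1 - \<theta> s)"
      using \<rho>[OF s] \<theta>(1,2)[OF s] M by auto
    ultimately have "(\<integral>\<^sup>+q. ennreal (c s q) \<partial>\<pi>) = ennreal (m s)
        \<and> m s \<le> \<rho> s * \<theta> s * m0 + \<rho> s * M * (1 - \<theta> s)"
      unfolding m_def using c by (intro nn_integral_le_affine[OF \<pi> _ _ m0]) auto
    also have "\<rho> s * \<theta> s * m0 + \<rho> s * M * (1 - \<theta> s) = \<rho> s * (\<theta> s * m0 + M * (1 - \<theta> s))"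
      by (simp add: algebra_simps)
    finally show ?thesis .
  qed
  have bound_Dmax: "(\<integral>\<^sup>+q. ennreal (c s q) \<partial>\<pi>) = ennreal (m s) \<and>
      m s \<le> \<rho> s * (\<theta> s * m0 + D\<^sub>m\<^sub>a\<^sub>x * (1 - \<theta> s))" if "0 \<le> s" for s
  proof (rule bound[OF that D(3)])
    fix s' assume "s' \<in> {0..s}"
    then show "D s' \<le> D\<^sub>m\<^sub>a\<^sub>x * \<rho> s'"
      using D(2)[of s'] mult_left_mono[OF \<rho>[of s'] D(3)] by simp
  qed
  have D_le_m: "D s \<le> m s" if "0 \<le> s" for s
  proof -
    have "ennreal (D s) \<le> ennreal (m s)"
      using D(1)[OF that] bound_Dmax[OF that] by simp
    then show ?thesis by (simp add: m_def)
  qed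
  have "m t \<le> \<rho> t * m0"
  proof (rule ratio_bootstrap[where m = m and \<rho> = \<rho> and \<theta> = \<theta> and T = t and B = "m0 + D\<^sub>m\<^sub>a\<^sub>x"])
    fix s assume s: "s \<in> {0..t}"
    show "0 < \<rho> s" using \<rho>[of s] s by simp
    show "\<theta> t \<le> \<theta> s" using \<theta>(3)[of s t] s by simp
    have "m s \<le> \<rho> s * (\<theta> s * m0 + D\<^sub>m\<^sub>a\<^sub>x * (1 - \<theta> s))"
      using bound_Dmax[of s] s by simp
    also have "\<dots> \<le> \<rho> s * (m0 + D\<^sub>m\<^sub>a\<^sub>x)"
      using \<rho>[of s] \<theta>(1,2)[of s] s m0(2) D(3)
      by (intro mult_left_mono add_mono mult_left_le_one_le mult_right_le_one_le) auto
    also have "\<dots> = (m0 + D\<^sub>m\<^sub>a\<^sub>x) * \<rho> s"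
      by simp
    finally show "m s \<le> (m0 + D\<^sub>m\<^sub>a\<^sub>x) * \<rho> s" .
  next
    fix M s assume M: "0 \<le> M" and m_le: "\<And>s'. s' \<in> {0..t} \<Longrightarrow> m s' \<le> M * \<rho> s'"
      and s: "s \<in> {0..t}"
    have "D s' \<le> M * \<rho> s'" if "s' \<in> {0..s}" for s'
      using D_le_m[of s'] m_le[of s'] that s by auto
    then show "m s \<le> \<rho> s * (\<theta> s * m0 + M * (1 - \<theta> s))"
      using bound[of s M] M s by simp
  qed (use \<theta>(1) t m0(2) in auto)
  then show ?thesis
    using bound_Dmax[OF t] m0 \<rho>[OF t] by (simp add: ennreal_leI flip: ennreal_mult)
qed

section \<open>Couplings and the Wasserstein distance\<close>

lemma borel_measurable_cost [measurable]:
  "(\<lambda>p::('a::euclidean_space \<times> 'a) \<times> ('a \<times> 'a). cost (fst p) (snd p)) \<in> borel_measurable borel"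
  unfolding cost_def by measurable

lemma integral_tdist_le_nn_integral_cost:
  fixes Z1 Z2 :: "'q \<Rightarrow> 'a::euclidean_space \<times> 'a"
  assumes "prob_space \<pi>" and [measurable]: "Z1 \<in> borel_measurable \<pi>" "Z2 \<in> borel_measurable \<pi>"
  shows "ennreal (\<integral>q. tdist (fst (Z1 q)) (fst (Z2 q)) \<partial>\<pi>) \<le> (\<integral>\<^sup>+q. ennreal (cost (Z1 q) (Z2 q)) \<partial>\<pi>)"
  and "(\<integral>q. tdist (fst (Z1 q)) (fst (Z2 q)) \<partial>\<pi>) \<le> real DIM('a)"
proof -
  interpret prob_space \<pi> by fact
  have int: "integrable \<pi> (\<lambda>q. tdist (fst (Z1 q)) (fst (Z2 q)))"
    by (intro integrable_tdist) (auto simp: finite_measure_axioms)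
  then show "ennreal (\<integral>q. tdist (fst (Z1 q)) (fst (Z2 q)) \<partial>\<pi>) \<le> (\<integral>\<^sup>+q. ennreal (cost (Z1 q) (Z2 q)) \<partial>\<pi>)"
    unfolding cost_def
    by (simp add: nn_integral_eq_integral[symmetric] tdist_nonneg nn_integral_mono ennreal_leI)
  show "(\<integral>q. tdist (fst (Z1 q)) (fst (Z2 q)) \<partial>\<pi>) \<le> real DIM('a)"
    using int by (intro integral_le_const) (auto simp: tdist_le_DIM)
qed

lemma cost_tor [simp]: "cost (tor x, v) (tor y, w) = cost (x, v) (y, w)"
  by (simp add: cost_def)

lemma distr_couplings:
  fixes \<Phi>1 \<Phi>2 :: "'a::euclidean_space \<times> 'a \<Rightarrow> 'a \<times> 'a"
  assumes \<pi>: "\<pi> \<in> couplings \<mu>1 \<mu>2"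
    and [measurable]: "\<Phi>1 \<in> borel_measurable borel" "\<Phi>2 \<in> borel_measurable borel"
  shows "distr \<pi> borel (\<lambda>p. (\<Phi>1 (fst p), \<Phi>2 (snd p))) \<in> couplings (distr \<mu>1 borel \<Phi>1) (distr \<mu>2 borel \<Phi>2)"
proof -
  have "prob_space \<pi>" and sets: "sets \<pi> = sets borel"
    and marginals: "distr \<pi> borel fst = \<mu>1" "distr \<pi> borel snd = \<mu>2"
    using \<pi> unfolding couplings_def by auto
  note measurable_cong_sets[OF sets refl, measurable_cong]
  have "distr (distr \<pi> borel (\<lambda>p. (\<Phi>1 (fst p), \<Phi>2 (snd p)))) borel fst = distr (distr \<pi> borel fst) borel \<Phi>1"
    by (simp add: distr_distr comp_def)
  moreover have "distr (distr \<pi> borel (\<lambda>p. (\<Phi>1 (fst p), \<Phi>2 (snd p)))) borel snd = distr (distr \<pi> borel snd) borel \<Phi>2"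
    by (simp add: distr_distr comp_def)
  moreover have "(\<lambda>p. (\<Phi>1 (fst p), \<Phi>2 (snd p))) \<in> measurable \<pi> borel"
    by measurable
  then have "prob_space (distr \<pi> borel (\<lambda>p. (\<Phi>1 (fst p), \<Phi>2 (snd p))))"
    by (rule prob_space.prob_space_distr[OF \<open>prob_space \<pi>\<close>])
  ultimately show ?thesis
    using marginals unfolding couplings_def by simp
qed

lemma W1_distr_le:
  fixes \<Phi>1 \<Phi>2 :: "'a::euclidean_space \<times> 'a \<Rightarrow> 'a \<times> 'a"
  assumes \<pi>: "\<pi> \<in> couplings \<mu>1 \<mu>2"
    and [measurable]: "\<Phi>1 \<in> borel_measurable borel" "\<Phi>2 \<in> borel_measurable borel"
  shows "W1 (distr \<mu>1 borel \<Phi>1) (distr \<mu>2 borel \<Phi>2) \<le> (\<integral>\<^sup>+p. ennreal (cost (\<Phi>1 (fst p)) (\<Phi>2 (snd p))) \<partial>\<pi>)"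
proof -
  have "sets \<pi> = sets borel" using \<pi> unfolding couplings_def by auto
  note measurable_cong_sets[OF this refl, measurable_cong]
  have "W1 (distr \<mu>1 borel \<Phi>1) (distr \<mu>2 borel \<Phi>2)
      \<le> (\<integral>\<^sup>+p. ennreal (cost (fst p) (snd p)) \<partial>distr \<pi> borel (\<lambda>p. (\<Phi>1 (fst p), \<Phi>2 (snd p))))"
    unfolding W1_def by (rule INF_lower[OF distr_couplings[OF assms]])
  also have "\<dots> = (\<integral>\<^sup>+p. ennreal (cost (\<Phi>1 (fst p)) (\<Phi>2 (snd p))) \<partial>\<pi>)"
    by (simp add: nn_integral_distr)
  finally show ?thesis .
qed

lemma le_ennreal_mult_INF:
  assumes "0 < c" and "\<And>p. p \<in> S \<Longrightarrow> x \<le> ennreal c * f p"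
  shows "x \<le> ennreal c * (INF p\<in>S. f p)"
proof -
  have inv: "ennreal (1 / c) * ennreal c = 1"
    using \<open>0 < c\<close> by (simp flip: ennreal_mult)
  have "x * ennreal (1 / c) \<le> (INF p\<in>S. f p)"
  proof (rule INF_greatest)
    fix p assume "p \<in> S"
    then have "x * ennreal (1 / c) \<le> ennreal c * f p * ennreal (1 / c)"
      using assms(2) by (intro mult_right_mono) auto
    also have "\<dots> = f p * (ennreal (1 / c) * ennreal c)"
      by (simp add: ac_simps)
    finally show "x * ennreal (1 / c) \<le> f p"
      unfolding inv by simp
  qed
  then have "ennreal c * (x * ennreal (1 / c)) \<le> ennreal c * (INF p\<in>S. f p)"
    by (rule mult_left_mono) simp
  also have "ennreal c * (x * ennreal (1 / c)) = x"
    using inv by (simp add: ac_simps)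
  finally show ?thesis .
qed

section \<open>The magnetic rotation\<close>

lemma norm_sq_orthogonal_combination:
  fixes a j p :: "'v::real_inner"
  assumes "inner a j = 0" "inner a p = 0" "inner j p = 0" "inner j j = inner a a"
  shows "(norm (x *\<^sub>R a + y *\<^sub>R j + z *\<^sub>R p))\<^sup>2 = (x\<^sup>2 + y\<^sup>2) * (norm a)\<^sup>2 + z\<^sup>2 * (norm p)\<^sup>2"
proof -
  have "inner (x *\<^sub>R a + y *\<^sub>R j + z *\<^sub>R p) (x *\<^sub>R a + y *\<^sub>R j + z *\<^sub>R p)
      = (x\<^sup>2 + y\<^sup>2) * inner a a + z\<^sup>2 * inner p p"
    using assms by (simp add: inner_add_left inner_add_right power2_eq_square algebra_simps)
      (simp add: inner_commute)
  then show ?thesis by (simp add: power2_norm_eq_inner)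
qed

lemma abs_sin_diff_le: "\<bar>sin (a - b :: real)\<bar> \<le> \<bar>sin a\<bar> + \<bar>sin b\<bar>"
proof -
  have "\<bar>sin (a - b)\<bar> \<le> \<bar>sin a\<bar> * \<bar>cos b\<bar> + \<bar>cos a\<bar> * \<bar>sin b\<bar>"
    using abs_triangle_ineq4[of "sin a * cos b" "cos a * sin b"] by (simp add: sin_diff abs_mult)
  also have "\<dots> \<le> \<bar>sin a\<bar> + \<bar>sin b\<bar>"
    by (intro add_mono mult_right_le_one_le mult_left_le_one_le) auto
  finally show ?thesis .
qed

text \<open>The Lorentz force is \<open>v \<mapsto> \<omega> J v\<close>, where \<open>J\<close> rotates the plane orthogonal to \<open>B\<close>
  by a right angle and \<open>P\<close> is the orthogonal projection onto the direction of \<open>B\<close>.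
  The weight \<open>\<kappa>\<close> of the motion along \<open>B\<close> may be \<open>0\<close> only if \<open>P = 0\<close> (the case \<open>d = 2\<close>).\<close>

locale magnetic_rotation =
  fixes \<omega> :: real and J P :: "'v::euclidean_space \<Rightarrow> 'v" and \<kappa> :: real
  assumes \<omega>_pos: "\<omega> > 0"
    and J_linear: "bounded_linear J" and P_linear: "bounded_linear P"
    and J_J: "\<And>v. J (J v) = P v - v"
    and J_P: "\<And>v. J (P v) = 0" and P_J: "\<And>v. P (J v) = 0" and P_P: "\<And>v. P (P v) = P v"
    and J_skew: "\<And>v w. inner (J v) w = - inner v (J w)"
    and P_symmetric: "\<And>v w. inner (P v) w = inner v (P w)"
    and \<kappa>: "(\<kappa> = 0 \<and> (\<forall>v. P v = 0)) \<or> \<kappa> = 1"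
begin

interpretation J: bounded_linear J by (rule J_linear)
interpretation P: bounded_linear P by (rule P_linear)

text \<open>\<open>rot \<tau> = exp (\<tau> \<omega> J)\<close> is the velocity flow of the magnetic field alone and
  \<open>rot_int \<tau> = \<integral>\<^sub>0\<^sup>\<tau> rot\<close>.\<close>

definition rot :: "real \<Rightarrow> 'v \<Rightarrow> 'v" where
  "rot \<tau> v = cos (\<omega> * \<tau>) *\<^sub>R (v - P v) + sin (\<omega> * \<tau>) *\<^sub>R J v + P v"

definition rot_int :: "real \<Rightarrow> 'v \<Rightarrow> 'v" where
  "rot_int \<tau> v = (sin (\<omega> * \<tau>) / \<omega>) *\<^sub>R (v - P v) + ((1 - cos (\<omega> * \<tau>)) / \<omega>) *\<^sub>R J v + \<tau> *\<^sub>R P v"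

definition alpha :: "real \<Rightarrow> real" where
  "alpha \<tau> = sqrt (2 * (1 - cos (\<omega> * \<tau>)) / \<omega>\<^sup>2 + \<kappa> * \<tau>\<^sup>2)"

definition beta :: "real \<Rightarrow> real" where
  "beta \<tau> = 2 * (\<tau> - sin (\<omega> * \<tau>) / \<omega>) / \<omega>\<^sup>2 + \<kappa> * \<tau> ^ 3 / 3 + \<tau>"

lemma inner_J_self: "inner (J v) v = 0"
  using J_skew[of v v] by (simp add: inner_commute)

lemma inner_diff_P_P: "inner (v - P v) (P v) = 0"
  using P_symmetric[of v "P v"] by (simp add: inner_diff_left inner_diff_right P_P inner_commute)

lemma inner_J_P: "inner (J v) (P v) = 0"
  using P_symmetric[of "J v" v] by (simp add: P_J inner_commute)

lemma inner_diff_P_J: "inner (v - P v) (J v) = 0"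
  using inner_J_self[of v] inner_J_P[of v] by (simp add: inner_diff_left inner_diff_right inner_commute)

lemma norm_sq_decomp: "(norm v)\<^sup>2 = (norm (v - P v))\<^sup>2 + (norm (P v))\<^sup>2"
  using inner_diff_P_P[of v] by (simp add: power2_norm_eq_inner inner_diff_left inner_diff_right inner_commute)

lemma inner_J_J: "inner (J v) (J v) = inner (v - P v) (v - P v)"
proof -
  have "inner (J v) (J v) = inner v v - inner v (P v)"
    using J_skew[of v "J v"] by (simp add: J_J inner_diff_right)
  then show ?thesis
    using inner_diff_P_P[of v] by (simp add: inner_diff_left inner_diff_right inner_commute)
qed

lemmas norm_sq_rot_combination =
  norm_sq_orthogonal_combination[OF inner_diff_P_J inner_diff_P_P inner_J_P inner_J_J]

lemma norm_rot [simp]: "norm (rot \<tau> v) = norm v"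
proof -
  have "(norm (rot \<tau> v))\<^sup>2 = ((cos (\<omega> * \<tau>))\<^sup>2 + (sin (\<omega> * \<tau>))\<^sup>2) * (norm (v - P v))\<^sup>2 + 1\<^sup>2 * (norm (P v))\<^sup>2"
    using norm_sq_rot_combination[of "cos (\<omega> * \<tau>)" v "sin (\<omega> * \<tau>)" 1] by (simp add: rot_def)
  then have "(norm (rot \<tau> v))\<^sup>2 = (norm v)\<^sup>2"
    using norm_sq_decomp[of v] by simp
  then show ?thesis by (simp add: power2_eq_iff_nonneg)
qed

lemma alpha_sq: "(alpha \<tau>)\<^sup>2 = 2 * (1 - cos (\<omega> * \<tau>)) / \<omega>\<^sup>2 + \<kappa> * \<tau>\<^sup>2"
  unfolding alpha_def using \<kappa> by (intro real_sqrt_pow2) auto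

lemma alpha_nonneg: "0 \<le> alpha \<tau>"
  unfolding alpha_def using \<kappa> by auto

lemma norm_rot_int_le: "norm (rot_int \<tau> v) \<le> alpha \<tau> * norm v"
proof -
  have "(sin (\<omega> * \<tau>) / \<omega>)\<^sup>2 + ((1 - cos (\<omega> * \<tau>)) / \<omega>)\<^sup>2 = 2 * (1 - cos (\<omega> * \<tau>)) / \<omega>\<^sup>2"
  proof -
    have "(sin (\<omega> * \<tau>))\<^sup>2 + (1 - cos (\<omega> * \<tau>))\<^sup>2 = 2 * (1 - cos (\<omega> * \<tau>))"
      using sin_cos_squared_add[of "\<omega> * \<tau>"] by (simp add: power2_eq_square algebra_simps)
    then show ?thesis by (simp add: power_divide add_divide_distrib[symmetric])
  qed
  then have "(norm (rot_int \<tau> v))\<^sup>2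
      = 2 * (1 - cos (\<omega> * \<tau>)) / \<omega>\<^sup>2 * (norm (v - P v))\<^sup>2 + \<tau>\<^sup>2 * (norm (P v))\<^sup>2"
    unfolding rot_int_def norm_sq_rot_combination by simp
  also have "\<dots> \<le> (alpha \<tau>)\<^sup>2 * (norm v)\<^sup>2"
  proof (cases "\<kappa> = 1")
    case False
    then have "P v = 0" "\<kappa> = 0" using \<kappa> by auto
    then show ?thesis unfolding alpha_sq by simp
  next
    case True
    define c where "c = 2 * (1 - cos (\<omega> * \<tau>)) / \<omega>\<^sup>2"
    have "0 \<le> c * (norm (P v))\<^sup>2" "0 \<le> \<tau>\<^sup>2 * (norm (v - P v))\<^sup>2"
      unfolding c_def by auto
    moreover have "(alpha \<tau>)\<^sup>2 = c + \<tau>\<^sup>2"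
      unfolding alpha_sq c_def using True by simp
    then have "(alpha \<tau>)\<^sup>2 * (norm v)\<^sup>2
        = c * (norm (v - P v))\<^sup>2 + \<tau>\<^sup>2 * (norm (P v))\<^sup>2 + c * (norm (P v))\<^sup>2 + \<tau>\<^sup>2 * (norm (v - P v))\<^sup>2"
      unfolding norm_sq_decomp[of v] by (simp add: algebra_simps)
    ultimately show ?thesis unfolding c_def by linarith
  qed
  finally have "(norm (rot_int \<tau> v))\<^sup>2 \<le> (alpha \<tau> * norm v)\<^sup>2"
    by (simp add: power_mult_distrib)
  then show ?thesis
    by (rule power2_le_imp_le) (simp add: alpha_nonneg)
qed

lemma rot_zero [simp]: "rot 0 v = v"
  unfolding rot_def by simp

lemma rot_int_zero [simp]: "rot_int 0 v = 0"
  unfolding rot_int_def by simp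

lemma rot_add: "rot \<tau> (v + w) = rot \<tau> v + rot \<tau> w"
  unfolding rot_def by (simp add: J.add P.add algebra_simps)

lemma rot_scaleR: "rot \<tau> (c *\<^sub>R v) = c *\<^sub>R rot \<tau> v"
  unfolding rot_def by (simp add: J.scaleR P.scaleR algebra_simps)

lemma rot_J: "rot \<tau> (J v) = J (rot \<tau> v)"
  unfolding rot_def by (simp add: J.add J.diff J.scaleR J_J J_P P_J algebra_simps)

lemma rot_int_add: "rot_int \<tau> (v + w) = rot_int \<tau> v + rot_int \<tau> w"
  unfolding rot_int_def by (simp add: J.add P.add algebra_simps)

lemma rot_int_J: "rot_int \<tau> (\<omega> *\<^sub>R J v) = rot \<tau> v - v"
proof -
  have "rot_int \<tau> (\<omega> *\<^sub>R J v) = sin (\<omega> * \<tau>) *\<^sub>R J v + (1 - cos (\<omega> * \<tau>)) *\<^sub>R (P v - v)"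
    using \<omega>_pos unfolding rot_int_def by (simp add: J.scaleR P.scaleR J_J P_J)
  then show ?thesis unfolding rot_def by (simp add: algebra_simps)
qed

lemma continuous_on_rot: "continuous_on S u \<Longrightarrow> continuous_on S (\<lambda>s. rot (t - s) (u s))"
  unfolding rot_def by (intro continuous_intros J.continuous_on P.continuous_on)

lemma continuous_on_rot_int: "continuous_on S u \<Longrightarrow> continuous_on S (\<lambda>s. rot_int (t - s) (u s))"
  unfolding rot_int_def using \<omega>_pos by (intro continuous_intros J.continuous_on P.continuous_on) auto

lemma has_vector_derivative_rot:
  assumes "(u has_vector_derivative u') (at s)"
  shows "((\<lambda>s. rot (t - s) (u s)) has_vector_derivative rot (t - s) u' - \<omega> *\<^sub>R J (rot (t - s) (u s))) (at s)"
  unfolding rot_def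
  by (rule has_vector_derivative_eq_rhs,
      (rule derivative_eq_intros J.has_vector_derivative P.has_vector_derivative assms refl)+)
    (simp add: J.add J.diff J.scaleR J_J J_P algebra_simps)

lemma has_vector_derivative_rot_int:
  assumes "(u has_vector_derivative u') (at s)"
  shows "((\<lambda>s. rot_int (t - s) (u s)) has_vector_derivative rot_int (t - s) u' - rot (t - s) (u s)) (at s)"
proof -
  have "\<omega> \<noteq> 0" using \<omega>_pos by simp
  show ?thesis
    unfolding rot_int_def rot_def
    by (rule has_vector_derivative_eq_rhs,
        (rule derivative_eq_intros J.has_vector_derivative P.has_vector_derivative assms refl \<open>\<omega> \<noteq> 0\<close>)+)
      (simp add: \<open>\<omega> \<noteq> 0\<close> algebra_simps power2_eq_square)
qed

lemma duhamel_derivatives: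
  assumes y: "(y has_vector_derivative u s) (at s)"
    and u: "(u has_vector_derivative f s + \<omega> *\<^sub>R J (u s)) (at s)"
  shows "((\<lambda>s. y s + rot_int (t - s) (u s)) has_vector_derivative rot_int (t - s) (f s)) (at s)"
    and "((\<lambda>s. rot (t - s) (u s)) has_vector_derivative rot (t - s) (f s)) (at s)"
   apply (rule has_vector_derivative_eq_rhs[OF has_vector_derivative_add[OF y has_vector_derivative_rot_int[OF u]]])
   apply (simp add: rot_int_add rot_int_J)
  apply (rule has_vector_derivative_eq_rhs[OF has_vector_derivative_rot[OF u]])
  apply (simp add: rot_add rot_scaleR rot_J)
  done

lemma alpha_eq_norm: "alpha \<tau> = norm (2 * \<bar>sin (\<omega> * \<tau> / 2)\<bar> / \<omega>, sqrt \<kappa> * \<tau>)"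
proof -
  have "cos (\<omega> * \<tau>) = 1 - 2 * (sin (\<omega> * \<tau> / 2))\<^sup>2"
    using cos_double_sin[of "\<omega> * \<tau> / 2"] by simp
  then show ?thesis
    using \<kappa> unfolding alpha_def norm_Pair by (auto simp: power_divide power_mult_distrib)
qed

lemma alpha_diff_le:
  assumes "0 \<le> s" "s \<le> t"
  shows "alpha (t - s) \<le> alpha t + alpha s"
proof -
  define \<sigma> where "\<sigma> \<tau> = 2 * \<bar>sin (\<omega> * \<tau> / 2)\<bar> / \<omega>" for \<tau>
  have "\<bar>sin (\<omega> * (t - s) / 2)\<bar> \<le> \<bar>sin (\<omega> * t / 2)\<bar> + \<bar>sin (\<omega> * s / 2)\<bar>"
    using abs_sin_diff_le[of "\<omega> * t / 2" "\<omega> * s / 2"] by (simp add: right_diff_distrib diff_divide_distrib)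
  then have "\<sigma> (t - s) \<le> \<sigma> t + \<sigma> s"
    unfolding \<sigma>_def using \<omega>_pos by (simp add: divide_right_mono add_divide_distrib[symmetric])
  moreover have "0 \<le> \<sigma> \<tau>" for \<tau>
    unfolding \<sigma>_def using \<omega>_pos by simp
  moreover have "0 \<le> sqrt \<kappa> * (t - s)" "sqrt \<kappa> * (t - s) \<le> sqrt \<kappa> * t + sqrt \<kappa> * s"
    using assms \<kappa> by (auto simp: algebra_simps)
  ultimately have "norm (\<sigma> (t - s), sqrt \<kappa> * (t - s)) \<le> norm (\<sigma> t + \<sigma> s, sqrt \<kappa> * t + sqrt \<kappa> * s)"
    unfolding norm_Pair by (intro real_sqrt_le_mono add_mono power_mono) auto
  also have "\<dots> = norm ((\<sigma> t, sqrt \<kappa> * t) + (\<sigma> s, sqrt \<kappa> * s))"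
    by simp
  also have "\<dots> \<le> norm (\<sigma> t, sqrt \<kappa> * t) + norm (\<sigma> s, sqrt \<kappa> * s)"
    by (rule norm_triangle_ineq)
  finally show ?thesis
    unfolding alpha_eq_norm \<sigma>_def .
qed

lemma one_add_alpha_diff_mult_le:
  assumes "0 \<le> s" "s \<le> t"
  shows "(1 + alpha (t - s)) * (1 + alpha s) \<le> (1 + alpha t) * (2 * (1 + (alpha s)\<^sup>2))"
proof -
  have a: "0 \<le> alpha t" "0 \<le> alpha s" "0 \<le> alpha (t - s)" using alpha_nonneg by auto
  have "(1 + alpha (t - s)) * (1 + alpha s) \<le> (1 + alpha t + alpha s) * (1 + alpha s)"
    using alpha_diff_le[OF assms] a by (intro mult_right_mono) auto
  also have "\<dots> \<le> (1 + alpha t) * (1 + 2 * alpha s + (alpha s)\<^sup>2)"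
    using a by (simp add: algebra_simps power2_eq_square mult_left_mono)
  also have "\<dots> \<le> (1 + alpha t) * (2 * (1 + (alpha s)\<^sup>2))"
    using a sum_squares_bound[of "alpha s" 1] by (intro mult_left_mono) (auto simp: power2_eq_square)
  finally show ?thesis .
qed

lemma has_real_derivative_beta: "(beta has_real_derivative 1 + (alpha \<tau>)\<^sup>2) (at \<tau>)"
proof -
  have "\<omega> \<noteq> 0" using \<omega>_pos by simp
  show ?thesis
    unfolding beta_def alpha_sq
    by (rule DERIV_cong, (rule derivative_eq_intros refl \<open>\<omega> \<noteq> 0\<close> | simp)+)
      (simp add: \<open>\<omega> \<noteq> 0\<close> field_simps power2_eq_square eval_nat_numeral)
qed

lemma beta_mono: "s \<le> t \<Longrightarrow> beta s \<le> beta t"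
  by (rule DERIV_nonneg_imp_nondecreasing[of s t beta])
    (auto intro!: exI has_real_derivative_beta add_nonneg_nonneg)

lemma beta_zero [simp]: "beta 0 = 0"
  unfolding beta_def by simp

lemma beta_nonneg: "0 \<le> t \<Longrightarrow> 0 \<le> beta t"
  using beta_mono[of 0 t] by simp

lemma continuous_on_alpha: "continuous_on S alpha"
proof -
  have "\<forall>x\<in>S. \<omega>\<^sup>2 \<noteq> 0" using \<omega>_pos by simp
  then show ?thesis unfolding alpha_def by (intro continuous_intros)
qed

lemma relative_motion_estimate_duhamel:
  fixes y u f :: "real \<Rightarrow> 'v"
  assumes y: "\<And>s. 0 \<le> s \<Longrightarrow> (y has_vector_derivative u s) (at s within {0..})"
    and u: "\<And>s. 0 \<le> s \<Longrightarrow> (u has_vector_derivative f s + \<omega> *\<^sub>R J (u s)) (at s within {0..})"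
    and \<Gamma>: "\<And>s. (\<Gamma> has_real_derivative \<Gamma>' s) (at s)"
    and bound: "\<And>s. s \<in> {0<..<t} \<Longrightarrow> (1 + alpha (t - s)) * norm (f s) \<le> \<Gamma>' s"
    and "0 \<le> t"
  shows "norm (y t) + norm (u t) \<le> norm (y 0) + (1 + alpha t) * norm (u 0) + (\<Gamma> t - \<Gamma> 0)"
proof -
  have "norm (y t + rot_int (t - t) (u t)) + norm (rot (t - t) (u t))
      \<le> norm (y 0 + rot_int (t - 0) (u 0)) + norm (rot (t - 0) (u 0)) + (\<Gamma> t - \<Gamma> 0)"
  proof (rule norm_add_norm_le_by_derivative[OF \<open>0 \<le> t\<close>])
    have yc: "continuous_on {0..t} y" and uc: "continuous_on {0..t} u"
      using continuous_on_halfline_derivative[OF y] continuous_on_halfline_derivative[OF u] by simp_all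
    show "continuous_on {0..t} (\<lambda>s. y s + rot_int (t - s) (u s))"
      by (rule continuous_on_add[OF yc continuous_on_rot_int[OF uc]])
    show "continuous_on {0..t} (\<lambda>s. rot (t - s) (u s))"
      by (rule continuous_on_rot[OF uc])
    show "continuous_on {0..t} \<Gamma>"
      by (rule DERIV_continuous_on[OF has_field_derivative_at_within[OF \<Gamma>]])
  next
    fix s assume s: "s \<in> {0<..<t}"
    have y': "(y has_vector_derivative u s) (at s)"
      and u': "(u has_vector_derivative f s + \<omega> *\<^sub>R J (u s)) (at s)"
      using has_vector_derivative_halfline_at[OF y] has_vector_derivative_halfline_at[OF u] s by auto
    show "((\<lambda>s. y s + rot_int (t - s) (u s)) has_vector_derivative rot_int (t - s) (f s)) (at s)"
      "((\<lambda>s. rot (t - s) (u s)) has_vector_derivative rot (t - s) (f s)) (at s)"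
      by (rule duhamel_derivatives[where y = y and u = u and f = f, OF y' u'])+
    show "(\<Gamma> has_real_derivative \<Gamma>' s) (at s)" by (rule \<Gamma>)
    show "norm (rot_int (t - s) (f s)) + norm (rot (t - s) (f s)) \<le> \<Gamma>' s"
      using norm_rot_int_le[of "t - s" "f s"] bound[OF s] by (simp add: algebra_simps)
  qed
  moreover have "norm (y 0 + rot_int t (u 0)) \<le> norm (y 0) + alpha t * norm (u 0)"
    using norm_triangle_ineq[of "y 0" "rot_int t (u 0)"] norm_rot_int_le[of t "u 0"] by simp
  ultimately show ?thesis by (simp add: algebra_simps)
qed

lemma relative_motion_estimate_isometric:
  fixes y u f :: "real \<Rightarrow> 'v"
  assumes y: "\<And>s. 0 \<le> s \<Longrightarrow> (y has_vector_derivative u s) (at s within {0..})"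
    and u: "\<And>s. 0 \<le> s \<Longrightarrow> (u has_vector_derivative f s + \<omega> *\<^sub>R J (u s)) (at s within {0..})"
    and \<Gamma>: "\<And>s. (\<Gamma> has_real_derivative \<Gamma>' s) (at s)"
    and bound: "\<And>s. s \<in> {0<..<t} \<Longrightarrow> norm (f s) + norm (u s) \<le> \<Gamma>' s"
    and "0 \<le> t"
  shows "norm (y t) + norm (u t) \<le> norm (y 0) + norm (u 0) + (\<Gamma> t - \<Gamma> 0)"
proof -
  have "norm (y t) + norm (rot (t - t) (u t)) \<le> norm (y 0) + norm (rot (t - 0) (u 0)) + (\<Gamma> t - \<Gamma> 0)"
  proof (rule norm_add_norm_le_by_derivative[OF \<open>0 \<le> t\<close>])
    show "continuous_on {0..t} y" "continuous_on {0..t} (\<lambda>s. rot (t - s) (u s))"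
      using continuous_on_halfline_derivative[OF y]
        continuous_on_rot[OF continuous_on_halfline_derivative[OF u]] by simp_all
    show "continuous_on {0..t} \<Gamma>"
      by (rule DERIV_continuous_on[OF has_field_derivative_at_within[OF \<Gamma>]])
  next
    fix s assume s: "s \<in> {0<..<t}"
    have y': "(y has_vector_derivative u s) (at s)"
      and u': "(u has_vector_derivative f s + \<omega> *\<^sub>R J (u s)) (at s)"
      using has_vector_derivative_halfline_at[OF y] has_vector_derivative_halfline_at[OF u] s by auto
    show "(y has_vector_derivative u s) (at s)"
      "((\<lambda>s. rot (t - s) (u s)) has_vector_derivative rot (t - s) (f s)) (at s)"
      by (rule y' duhamel_derivatives(2)[where y = y and u = u and f = f, OF y' u'])+
    show "(\<Gamma> has_real_derivative \<Gamma>' s) (at s)" by (rule \<Gamma>)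
    show "norm (u s) + norm (rot (t - s) (f s)) \<le> \<Gamma>' s"
      using bound[OF s] by simp
  qed
  then show ?thesis by simp
qed

definition mag_factor :: "real \<Rightarrow> real \<Rightarrow> real" where
  "mag_factor H t = (1 + alpha t) * exp (4 * H * beta t)"

definition mag_weight :: "real \<Rightarrow> real \<Rightarrow> real" where
  "mag_weight H t = exp (- (2 * H * beta t))"

definition classical_factor :: "real \<Rightarrow> real \<Rightarrow> real" where
  "classical_factor H t = exp ((1 + 2 * H) * t)"

definition classical_weight :: "real \<Rightarrow> real \<Rightarrow> real" where
  "classical_weight H t = exp (- (H * t))"

lemma relative_motion_slack_mag:
  fixes y u f :: "real \<Rightarrow> 'v"
  assumes H: "0 \<le> H" and M: "0 \<le> M"
    and y: "\<And>s. 0 \<le> s \<Longrightarrow> (y has_vector_derivative u s) (at s within {0..})"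
    and u: "\<And>s. 0 \<le> s \<Longrightarrow> (u has_vector_derivative f s + \<omega> *\<^sub>R J (u s)) (at s within {0..})"
    and f: "\<And>s. s \<in> {0..t} \<Longrightarrow> norm (f s) \<le> H * (norm (y s) + M * mag_factor H s)"
    and t: "0 \<le> t" and "0 < \<epsilon>"
  shows "norm (y t) + norm (u t) \<le> (1 + alpha t) * ((norm (y 0) + norm (u 0) + \<epsilon>) * exp (2 * H * beta t)
    + M * (exp (4 * H * beta t) - exp (2 * H * beta t)))"
proof -
  define c where "c s = norm (y s) + norm (u s)" for s
  define E where "E s = exp (4 * H * beta s)" for s
  define Q where "Q s = exp (2 * H * beta s)" for s
  \<comment> \<open>\<open>\<Phi>\<close> solves \<open>\<Phi>' = 2 (1 + alpha\<^sup>2) H (\<Phi> + M E)\<close> with \<open>\<Phi> 0 = c 0 + \<epsilon>\<close>.\<close>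
  define \<Phi> where "\<Phi> s = (c 0 + \<epsilon>) * Q s + M * (E s - Q s)" for s
  define h where "h s = H * (\<Phi> s + M * E s)" for s
  have \<Phi>': "(\<Phi> has_real_derivative 2 * (1 + (alpha s)\<^sup>2) * h s) (at s)" for s
    unfolding \<Phi>_def h_def Q_def E_def
    by (rule DERIV_cong, (rule derivative_eq_intros has_real_derivative_beta refl)+)
      (simp add: algebra_simps)
  have h_nonneg: "0 \<le> h s" if "0 \<le> s" for s
    using H M \<open>0 < \<epsilon>\<close> beta_nonneg[OF that]
    unfolding h_def \<Phi>_def Q_def E_def c_def by (simp add: mult_right_mono)
  have "c t \<le> (1 + alpha t) * \<Phi> t"
  proof (rule le_by_continuous_induction[where c = c and \<Psi> = "\<lambda>s. (1 + alpha s) * \<Phi> s" and T = t])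
    show "continuous_on {0..t} c"
      unfolding c_def
      by (intro continuous_on_add continuous_on_norm
          continuous_on_halfline_derivative[OF y] continuous_on_halfline_derivative[OF u])
    show "continuous_on {0..t} (\<lambda>s. (1 + alpha s) * \<Phi> s)"
      by (intro continuous_on_mult continuous_on_add continuous_on_const continuous_on_alpha
          DERIV_continuous_on[OF has_field_derivative_at_within[OF \<Phi>']])
  next
    fix t' assume t': "t' \<in> {0..t}" and below: "\<And>s. s \<in> {0..<t'} \<Longrightarrow> c s \<le> (1 + alpha s) * \<Phi> s"
    have bound: "(1 + alpha (t' - s)) * norm (f s) \<le> (1 + alpha t') * (2 * (1 + (alpha s)\<^sup>2) * h s)"
      if s: "s \<in> {0<..<t'}" for s
    proof -
      have "norm (y s) \<le> (1 + alpha s) * \<Phi> s"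
        using below[of s] s norm_ge_zero[of "u s"] unfolding c_def by (auto simp del: norm_ge_zero)
      then have "norm (f s) \<le> H * ((1 + alpha s) * \<Phi> s + M * mag_factor H s)"
        using f[of s] s t' H by (auto intro: order_trans[OF _ mult_left_mono])
      also have "\<dots> = (1 + alpha s) * h s"
        unfolding h_def mag_factor_def E_def by (simp add: algebra_simps)
      finally have "(1 + alpha (t' - s)) * norm (f s) \<le> (1 + alpha (t' - s)) * (1 + alpha s) * h s"
        using alpha_nonneg[of "t' - s"] by (simp add: mult_left_mono mult.assoc)
      also have "\<dots> \<le> (1 + alpha t') * (2 * (1 + (alpha s)\<^sup>2)) * h s"
        using one_add_alpha_diff_mult_le[of s t'] h_nonneg[of s] s by (intro mult_right_mono) auto
      finally show ?thesis by (simp add: mult.assoc)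
    qed
    have \<Gamma>': "((\<lambda>s. (1 + alpha t') * \<Phi> s) has_real_derivative
        (1 + alpha t') * (2 * (1 + (alpha s)\<^sup>2) * h s)) (at s)" for s
      by (intro DERIV_cmult \<Phi>')
    have "c t' \<le> norm (y 0) + (1 + alpha t') * norm (u 0) + ((1 + alpha t') * \<Phi> t' - (1 + alpha t') * \<Phi> 0)"
      unfolding c_def using t' by (intro relative_motion_estimate_duhamel[OF y u \<Gamma>' bound]) auto
    also have "\<dots> \<le> (1 + alpha t') * (\<Phi> t' - \<epsilon>)"
      using alpha_nonneg[of t'] unfolding \<Phi>_def Q_def E_def c_def by (simp add: algebra_simps)
    also have "\<dots> < (1 + alpha t') * \<Phi> t'"
      using alpha_nonneg[of t'] \<open>0 < \<epsilon>\<close> by (simp add: algebra_simps add_pos_nonneg)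
    finally show "c t' < (1 + alpha t') * \<Phi> t'" .
  qed (use t in auto)
  then show ?thesis unfolding \<Phi>_def Q_def E_def c_def .
qed

lemma relative_motion_bound_mag:
  fixes y u f :: "real \<Rightarrow> 'v"
  assumes H: "0 \<le> H" and M: "0 \<le> M"
    and y: "\<And>s. 0 \<le> s \<Longrightarrow> (y has_vector_derivative u s) (at s within {0..})"
    and u: "\<And>s. 0 \<le> s \<Longrightarrow> (u has_vector_derivative f s + \<omega> *\<^sub>R J (u s)) (at s within {0..})"
    and f: "\<And>s. s \<in> {0..t} \<Longrightarrow> norm (f s) \<le> H * (norm (y s) + M * mag_factor H s)"
    and t: "0 \<le> t"
  shows "norm (y t) + norm (u t)
    \<le> mag_factor H t * (mag_weight H t * (norm (y 0) + norm (u 0)) + M * (1 - mag_weight H t))"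
proof -
  define c0 where "c0 = norm (y 0) + norm (u 0)"
  have "norm (y t) + norm (u t) \<le> ((1 + alpha t) * exp (2 * H * beta t)) * (c0 + \<epsilon>)
      + (1 + alpha t) * M * (exp (4 * H * beta t) - exp (2 * H * beta t))" if "0 < \<epsilon>" for \<epsilon>
    using relative_motion_slack_mag[OF H M y u f t that] unfolding c0_def by (simp add: algebra_simps)
  moreover have "0 < (1 + alpha t) * exp (2 * H * beta t)"
    using alpha_nonneg[of t] by (simp add: add_pos_nonneg)
  ultimately have "norm (y t) + norm (u t) \<le> ((1 + alpha t) * exp (2 * H * beta t)) * c0
      + (1 + alpha t) * M * (exp (4 * H * beta t) - exp (2 * H * beta t))"
    by (rule le_affine_of_slack)
  also have "\<dots> = mag_factor H t * (mag_weight H t * c0 + M * (1 - mag_weight H t))"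
    unfolding mag_factor_def mag_weight_def by (simp add: algebra_simps flip: exp_add)
  finally show ?thesis unfolding c0_def .
qed

lemma relative_motion_slack_classical:
  fixes y u f :: "real \<Rightarrow> 'v"
  assumes H: "0 \<le> H" and M: "0 \<le> M"
    and y: "\<And>s. 0 \<le> s \<Longrightarrow> (y has_vector_derivative u s) (at s within {0..})"
    and u: "\<And>s. 0 \<le> s \<Longrightarrow> (u has_vector_derivative f s + \<omega> *\<^sub>R J (u s)) (at s within {0..})"
    and f: "\<And>s. s \<in> {0..t} \<Longrightarrow> norm (f s) \<le> H * (norm (y s) + M * classical_factor H s)"
    and t: "0 \<le> t" and "0 < \<epsilon>"
  shows "norm (y t) + norm (u t) \<le> (norm (y 0) + norm (u 0) + \<epsilon>) * exp ((1 + H) * t)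
    + M * (exp ((1 + 2 * H) * t) - exp ((1 + H) * t))"
proof -
  define c where "c s = norm (y s) + norm (u s)" for s
  define E where "E s = exp ((1 + 2 * H) * s)" for s
  define Q where "Q s = exp ((1 + H) * s)" for s
  \<comment> \<open>\<open>\<Phi>\<close> solves \<open>\<Phi>' = (1 + H) \<Phi> + H M E\<close> with \<open>\<Phi> 0 = c 0 + \<epsilon>\<close>.\<close>
  define \<Phi> where "\<Phi> s = (c 0 + \<epsilon>) * Q s + M * (E s - Q s)" for s
  have \<Phi>': "(\<Phi> has_real_derivative (1 + H) * \<Phi> s + H * M * E s) (at s)" for s
    unfolding \<Phi>_def Q_def E_def
    by (rule DERIV_cong, (rule derivative_eq_intros refl)+) (simp add: algebra_simps)
  have "c t \<le> \<Phi> t"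
  proof (rule le_by_continuous_induction[where c = c and \<Psi> = \<Phi> and T = t])
    show "continuous_on {0..t} c"
      unfolding c_def
      by (intro continuous_on_add continuous_on_norm
          continuous_on_halfline_derivative[OF y] continuous_on_halfline_derivative[OF u])
    show "continuous_on {0..t} \<Phi>"
      by (rule DERIV_continuous_on[OF has_field_derivative_at_within[OF \<Phi>']])
  next
    fix t' assume t': "t' \<in> {0..t}" and below: "\<And>s. s \<in> {0..<t'} \<Longrightarrow> c s \<le> \<Phi> s"
    have bound: "norm (f s) + norm (u s) \<le> (1 + H) * \<Phi> s + H * M * E s" if s: "s \<in> {0<..<t'}" for s
    proof -
      have "norm (f s) + norm (u s) \<le> H * norm (y s) + norm (u s) + H * M * E s"
        using f[of s] s t' unfolding classical_factor_def E_def by (simp add: algebra_simps)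
      also have "\<dots> \<le> (1 + H) * c s + H * M * E s"
        using H unfolding c_def by (simp add: algebra_simps)
      also have "\<dots> \<le> (1 + H) * \<Phi> s + H * M * E s"
        using below[of s] s H by (simp add: mult_left_mono)
      finally show ?thesis .
    qed
    have "c t' \<le> norm (y 0) + norm (u 0) + (\<Phi> t' - \<Phi> 0)"
      unfolding c_def using t' by (intro relative_motion_estimate_isometric[OF y u \<Phi>' bound]) auto
    also have "\<dots> = \<Phi> t' - \<epsilon>"
      unfolding \<Phi>_def Q_def E_def c_def by simp
    finally show "c t' < \<Phi> t'" using \<open>0 < \<epsilon>\<close> by simp
  qed (use t in auto)
  then show ?thesis unfolding \<Phi>_def Q_def E_def c_def .
qed

lemma relative_motion_bound_classical:
  fixes y u f :: "real \<Rightarrow> 'v"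
  assumes H: "0 \<le> H" and M: "0 \<le> M"
    and y: "\<And>s. 0 \<le> s \<Longrightarrow> (y has_vector_derivative u s) (at s within {0..})"
    and u: "\<And>s. 0 \<le> s \<Longrightarrow> (u has_vector_derivative f s + \<omega> *\<^sub>R J (u s)) (at s within {0..})"
    and f: "\<And>s. s \<in> {0..t} \<Longrightarrow> norm (f s) \<le> H * (norm (y s) + M * classical_factor H s)"
    and t: "0 \<le> t"
  shows "norm (y t) + norm (u t)
    \<le> classical_factor H t * (classical_weight H t * (norm (y 0) + norm (u 0)) + M * (1 - classical_weight H t))"
proof -
  define c0 where "c0 = norm (y 0) + norm (u 0)"
  have "norm (y t) + norm (u t) \<le> exp ((1 + H) * t) * (c0 + \<epsilon>)
      + M * (exp ((1 + 2 * H) * t) - exp ((1 + H) * t))" if "0 < \<epsilon>" for \<epsilon>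
    using relative_motion_slack_classical[OF H M y u f t that] unfolding c0_def by (simp add: algebra_simps)
  moreover have "0 < exp ((1 + H) * t)"
    by simp
  ultimately have "norm (y t) + norm (u t) \<le> exp ((1 + H) * t) * c0 + M * (exp ((1 + 2 * H) * t) - exp ((1 + H) * t))"
    by (rule le_affine_of_slack)
  also have "\<dots> = classical_factor H t * (classical_weight H t * c0 + M * (1 - classical_weight H t))"
    unfolding classical_factor_def classical_weight_def by (simp add: algebra_simps flip: exp_add)
  finally show ?thesis unfolding c0_def .
qed

lemma mag_factor_ge_one: "0 \<le> H \<Longrightarrow> 0 \<le> t \<Longrightarrow> 1 \<le> mag_factor H t"
  unfolding mag_factor_def using alpha_nonneg[of t] beta_nonneg[of t]
  by (intro order_trans[OF _ mult_mono[of 1 "1 + alpha t" 1]]) auto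

lemma mag_weight_pos: "0 < mag_weight H t"
  unfolding mag_weight_def by simp

lemma mag_weight_le_one: "0 \<le> H \<Longrightarrow> 0 \<le> t \<Longrightarrow> mag_weight H t \<le> 1"
  unfolding mag_weight_def using beta_nonneg[of t] by simp

lemma mag_weight_antimono: "0 \<le> H \<Longrightarrow> s \<le> t \<Longrightarrow> mag_weight H t \<le> mag_weight H s"
  unfolding mag_weight_def using beta_mono[of s t] by (simp add: mult_left_mono)

lemma classical_factor_ge_one: "0 \<le> H \<Longrightarrow> 0 \<le> t \<Longrightarrow> 1 \<le> classical_factor H t"
  unfolding classical_factor_def by simp

lemma classical_weight_pos: "0 < classical_weight H t"
  unfolding classical_weight_def by simp

lemma classical_weight_le_one: "0 \<le> H \<Longrightarrow> 0 \<le> t \<Longrightarrow> classical_weight H t \<le> 1"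
  unfolding classical_weight_def by simp

lemma classical_weight_antimono: "0 \<le> H \<Longrightarrow> s \<le> t \<Longrightarrow> classical_weight H t \<le> classical_weight H s"
  unfolding classical_weight_def by (simp add: mult_left_mono)

lemma has_vector_derivative_relative_motion:
  assumes "((\<lambda>s. Z1 s) has_vector_derivative (snd (Z1 s), F1 + \<omega> *\<^sub>R J (snd (Z1 s)))) (at s within S)"
    and "((\<lambda>s. Z2 s) has_vector_derivative (snd (Z2 s), F2 + \<omega> *\<^sub>R J (snd (Z2 s)))) (at s within S)"
  shows "((\<lambda>s. fst (Z1 s) - fst (Z2 s) - k) has_vector_derivative snd (Z1 s) - snd (Z2 s)) (at s within S)"
    and "((\<lambda>s. snd (Z1 s) - snd (Z2 s)) has_vector_derivative
      (F1 - F2) + \<omega> *\<^sub>R J (snd (Z1 s) - snd (Z2 s))) (at s within S)"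
  using bounded_linear.has_vector_derivative[OF bounded_linear_fst assms(1)]
    bounded_linear.has_vector_derivative[OF bounded_linear_fst assms(2)]
    bounded_linear.has_vector_derivative[OF bounded_linear_snd assms(1)]
    bounded_linear.has_vector_derivative[OF bounded_linear_snd assms(2)]
  by (auto intro!: derivative_eq_intros simp: J.diff scaleR_diff_right algebra_simps)

lemma nn_integral_characteristics_cost_le_rate:
  fixes \<pi> :: "'q measure" and Z1 Z2 :: "real \<Rightarrow> 'q \<Rightarrow> 'v \<times> 'v" and F1 F2 :: "real \<Rightarrow> 'q \<Rightarrow> 'v"
  assumes \<pi>: "prob_space \<pi>"
    and meas: "\<And>s. 0 \<le> s \<Longrightarrow> Z1 s \<in> borel_measurable \<pi>" "\<And>s. 0 \<le> s \<Longrightarrow> Z2 s \<in> borel_measurable \<pi>"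
    and Z1: "\<And>q s. 0 \<le> s \<Longrightarrow>
      ((\<lambda>s. Z1 s q) has_vector_derivative (snd (Z1 s q), F1 s q + \<omega> *\<^sub>R J (snd (Z1 s q)))) (at s within {0..})"
    and Z2: "\<And>q s. 0 \<le> s \<Longrightarrow>
      ((\<lambda>s. Z2 s q) has_vector_derivative (snd (Z2 s q), F2 s q + \<omega> *\<^sub>R J (snd (Z2 s q)))) (at s within {0..})"
    and F: "\<And>q s k. 0 \<le> s \<Longrightarrow> k \<in> lattice \<Longrightarrow> norm (F1 s q - F2 s q)
      \<le> H * norm (fst (Z1 s q) - fst (Z2 s q) - k) + H * (\<integral>q. tdist (fst (Z1 s q)) (fst (Z2 s q)) \<partial>\<pi>)"
    and H: "0 \<le> H"
    and \<rho>: "\<And>s. 0 \<le> s \<Longrightarrow> 1 \<le> \<rho> s"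
    and \<theta>: "\<And>s. 0 < \<theta> s" "\<And>s. 0 \<le> s \<Longrightarrow> \<theta> s \<le> 1" "\<And>s t. 0 \<le> s \<Longrightarrow> s \<le> t \<Longrightarrow> \<theta> t \<le> \<theta> s"
    and relative: "\<And>M y u f t. 0 \<le> M
      \<Longrightarrow> (\<And>s. 0 \<le> s \<Longrightarrow> (y has_vector_derivative u s) (at s within {0..}))
      \<Longrightarrow> (\<And>s. 0 \<le> s \<Longrightarrow> (u has_vector_derivative f s + \<omega> *\<^sub>R J (u s)) (at s within {0..}))
      \<Longrightarrow> (\<And>s. s \<in> {0..t} \<Longrightarrow> norm (f s) \<le> H * (norm (y s) + M * \<rho> s)) \<Longrightarrow> 0 \<le> t
      \<Longrightarrow> norm (y t) + norm (u t) \<le> \<rho> t * (\<theta> t * (norm (y 0) + norm (u 0)) + M * (1 - \<theta> t))"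
    and t: "0 \<le> t"
  shows "(\<integral>\<^sup>+q. ennreal (cost (Z1 t q) (Z2 t q)) \<partial>\<pi>) \<le> ennreal (\<rho> t) * (\<integral>\<^sup>+q. ennreal (cost (Z1 0 q) (Z2 0 q)) \<partial>\<pi>)"
proof -
  define D where "D s = (\<integral>q. tdist (fst (Z1 s q)) (fst (Z2 s q)) \<partial>\<pi>)" for s
  have D_le: "ennreal (D s) \<le> (\<integral>\<^sup>+q. ennreal (cost (Z1 s q) (Z2 s q)) \<partial>\<pi>)" "D s \<le> real DIM('v)"
    if "0 \<le> s" for s
    unfolding D_def by (rule integral_tdist_le_nn_integral_cost[OF \<pi> meas(1,2)[OF that]])+
  note y = has_vector_derivative_relative_motion(1)[OF Z1 Z2]
  note u = has_vector_derivative_relative_motion(2)[OF Z1 Z2]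
  show ?thesis
  proof (rule nn_integral_bootstrap[OF \<pi> _ _ D_le(1) D_le(2) of_nat_0_le_iff \<rho> \<theta>(1) \<theta>(2,3) _ t])
    fix M t' q assume M: "0 \<le> M" and t': "0 \<le> t'" and D_le_M: "\<And>s. s \<in> {0..t'} \<Longrightarrow> D s \<le> M * \<rho> s"
    have "norm (fst (Z1 t' q) - fst (Z2 t' q) - k) + norm (snd (Z1 t' q) - snd (Z2 t' q))
        \<le> (\<rho> t' * \<theta> t') * (norm (fst (Z1 0 q) - fst (Z2 0 q) - k) + norm (snd (Z1 0 q) - snd (Z2 0 q)))
          + \<rho> t' * M * (1 - \<theta> t')" if k: "k \<in> lattice" for k
    proof -
      have "norm (F1 s q - F2 s q) \<le> H * (norm (fst (Z1 s q) - fst (Z2 s q) - k) + M * \<rho> s)"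
        if "s \<in> {0..t'}" for s
        using F[OF _ k, of s q] D_le_M[OF that] H that unfolding D_def
        by (auto simp: distrib_left intro: order_trans[OF _ add_left_mono[OF mult_left_mono]])
      from relative[OF M y u this t'] show ?thesis by (simp add: algebra_simps)
    qed
    moreover have "0 < \<rho> t' * \<theta> t'"
      using \<rho>[OF t'] \<theta>(1)[of t'] by simp
    ultimately have "tdist (fst (Z1 t' q)) (fst (Z2 t' q)) + norm (snd (Z1 t' q) - snd (Z2 t' q))
        \<le> (\<rho> t' * \<theta> t') * (tdist (fst (Z1 0 q)) (fst (Z2 0 q)) + norm (snd (Z1 0 q) - snd (Z2 0 q)))
          + \<rho> t' * M * (1 - \<theta> t')"
      by (intro tdist_add_le_of_lattice) auto
    then show "cost (Z1 t' q) (Z2 t' q) \<le> \<rho> t' * (\<theta> t' * cost (Z1 0 q) (Z2 0 q) + M * (1 - \<theta> t'))"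
      unfolding cost_def by (simp add: algebra_simps)
  qed (use meas in \<open>auto simp: cost_def tdist_nonneg\<close>)
qed

lemma nn_integral_characteristics_cost_le:
  fixes \<pi> :: "'q measure" and Z1 Z2 :: "real \<Rightarrow> 'q \<Rightarrow> 'v \<times> 'v" and F1 F2 :: "real \<Rightarrow> 'q \<Rightarrow> 'v"
  assumes "prob_space \<pi>"
    and "\<And>s. 0 \<le> s \<Longrightarrow> Z1 s \<in> borel_measurable \<pi>" "\<And>s. 0 \<le> s \<Longrightarrow> Z2 s \<in> borel_measurable \<pi>"
    and "\<And>q s. 0 \<le> s \<Longrightarrow>
      ((\<lambda>s. Z1 s q) has_vector_derivative (snd (Z1 s q), F1 s q + \<omega> *\<^sub>R J (snd (Z1 s q)))) (at s within {0..})"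
    and "\<And>q s. 0 \<le> s \<Longrightarrow>
      ((\<lambda>s. Z2 s q) has_vector_derivative (snd (Z2 s q), F2 s q + \<omega> *\<^sub>R J (snd (Z2 s q)))) (at s within {0..})"
    and "\<And>q s k. 0 \<le> s \<Longrightarrow> k \<in> lattice \<Longrightarrow> norm (F1 s q - F2 s q)
      \<le> H * norm (fst (Z1 s q) - fst (Z2 s q) - k) + H * (\<integral>q. tdist (fst (Z1 s q)) (fst (Z2 s q)) \<partial>\<pi>)"
    and H: "0 \<le> H" and "0 \<le> t"
  shows "(\<integral>\<^sup>+q. ennreal (cost (Z1 t q) (Z2 t q)) \<partial>\<pi>)
    \<le> ennreal (min (mag_factor H t) (classical_factor H t)) * (\<integral>\<^sup>+q. ennreal (cost (Z1 0 q) (Z2 0 q)) \<partial>\<pi>)"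
proof -
  have "(\<integral>\<^sup>+q. ennreal (cost (Z1 t q) (Z2 t q)) \<partial>\<pi>)
      \<le> ennreal (mag_factor H t) * (\<integral>\<^sup>+q. ennreal (cost (Z1 0 q) (Z2 0 q)) \<partial>\<pi>)"
    using H by (intro nn_integral_characteristics_cost_le_rate[OF assms(1-6) H,
          where \<rho> = "mag_factor H" and \<theta> = "mag_weight H"] relative_motion_bound_mag
        mag_factor_ge_one mag_weight_pos mag_weight_le_one mag_weight_antimono assms(8)) auto
  moreover have "(\<integral>\<^sup>+q. ennreal (cost (Z1 t q) (Z2 t q)) \<partial>\<pi>)
      \<le> ennreal (classical_factor H t) * (\<integral>\<^sup>+q. ennreal (cost (Z1 0 q) (Z2 0 q)) \<partial>\<pi>)"
    using H by (intro nn_integral_characteristics_cost_le_rate[OF assms(1-6) H,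
          where \<rho> = "classical_factor H" and \<theta> = "classical_weight H"] relative_motion_bound_classical
        classical_factor_ge_one classical_weight_pos classical_weight_le_one classical_weight_antimono assms(8)) auto
  ultimately show ?thesis by (simp add: min_def)
qed

lemma W1_vb_solution_le_coupling:
  fixes K :: "'v \<Rightarrow> real" and \<mu>1 \<mu>2 :: "real \<Rightarrow> ('v \<times> 'v) measure"
  assumes per: "periodic K" and grad: "\<forall>x. GDERIV K x :> G x"
    and lip: "\<forall>x y. norm (G x - G y) \<le> H * norm (x - y)"
    and sol1: "vb_solution G (\<lambda>v. \<omega> *\<^sub>R J v) \<mu>1" and sol2: "vb_solution G (\<lambda>v. \<omega> *\<^sub>R J v) \<mu>2"
    and \<pi>: "\<pi> \<in> couplings (\<mu>1 0) (\<mu>2 0)" and t: "0 \<le> t"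
  shows "W1 (\<mu>1 t) (\<mu>2 t)
    \<le> ennreal (min (mag_factor H t) (classical_factor H t)) * (\<integral>\<^sup>+p. ennreal (cost (fst p) (snd p)) \<partial>\<pi>)"
proof -
  have "prob_space \<pi>" and sets: "sets \<pi> = sets borel"
    and marginals: "\<mu>1 0 = distr \<pi> borel fst" "\<mu>2 0 = distr \<pi> borel snd"
    using \<pi> unfolding couplings_def by auto
  note measurable_cong_sets[OF sets refl, measurable_cong]
  have fst_meas: "fst \<in> measurable \<pi> borel" and snd_meas: "snd \<in> measurable \<pi> borel"
    by measurable
  obtain Z1 where Z1: "\<And>z. Z1 0 z = z" "\<And>s. 0 \<le> s \<Longrightarrow> Z1 s \<in> borel_measurable borel"
    "\<And>z s. 0 \<le> s \<Longrightarrow> ((\<lambda>s. Z1 s z) has_vector_derivative (snd (Z1 s z),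
      (\<integral>q. G (fst (Z1 s z) - fst (Z1 s (fst q))) \<partial>\<pi>) + \<omega> *\<^sub>R J (snd (Z1 s z)))) (at s within {0..})"
    "\<And>s. 0 \<le> s \<Longrightarrow> \<mu>1 s = distr (\<mu>1 0) borel (\<lambda>z. (tor (fst (Z1 s z)), snd (Z1 s z)))"
    by (rule vb_solution_characteristicsE[OF per grad lip sol1 fst_meas marginals(1)], rule that)
  obtain Z2 where Z2: "\<And>z. Z2 0 z = z" "\<And>s. 0 \<le> s \<Longrightarrow> Z2 s \<in> borel_measurable borel"
    "\<And>z s. 0 \<le> s \<Longrightarrow> ((\<lambda>s. Z2 s z) has_vector_derivative (snd (Z2 s z),
      (\<integral>q. G (fst (Z2 s z) - fst (Z2 s (snd q))) \<partial>\<pi>) + \<omega> *\<^sub>R J (snd (Z2 s z)))) (at s within {0..})"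
    "\<And>s. 0 \<le> s \<Longrightarrow> \<mu>2 s = distr (\<mu>2 0) borel (\<lambda>z. (tor (fst (Z2 s z)), snd (Z2 s z)))"
    by (rule vb_solution_characteristicsE[OF per grad lip sol2 snd_meas marginals(2)], rule that)
  have "W1 (\<mu>1 t) (\<mu>2 t) \<le> (\<integral>\<^sup>+q. ennreal (cost (tor (fst (Z1 t (fst q))), snd (Z1 t (fst q)))
      (tor (fst (Z2 t (snd q))), snd (Z2 t (snd q)))) \<partial>\<pi>)"
    unfolding Z1(4)[OF t] Z2(4)[OF t]
    using Z1(2)[OF t, measurable] Z2(2)[OF t, measurable] by (intro W1_distr_le[OF \<pi>]) measurable
  also have "\<dots> = (\<integral>\<^sup>+q. ennreal (cost (Z1 t (fst q)) (Z2 t (snd q))) \<partial>\<pi>)"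
    by simp
  also have "\<dots> \<le> ennreal (min (mag_factor H t) (classical_factor H t)) *
      (\<integral>\<^sup>+q. ennreal (cost (Z1 0 (fst q)) (Z2 0 (snd q))) \<partial>\<pi>)"
  proof (rule nn_integral_characteristics_cost_le[OF \<open>prob_space \<pi>\<close> _ _ Z1(3) Z2(3) _
        lipschitz_const_nonneg[OF lip] t])
    fix s :: real assume s: "0 \<le> s"
    note Z1(2)[OF s, measurable] Z2(2)[OF s, measurable]
    show "(\<lambda>q. Z1 s (fst q)) \<in> borel_measurable \<pi>" "(\<lambda>q. Z2 s (snd q)) \<in> borel_measurable \<pi>"
      by measurable
    fix q and k :: 'v assume "k \<in> lattice"
    then show "norm ((\<integral>q'. G (fst (Z1 s (fst q)) - fst (Z1 s (fst q'))) \<partial>\<pi>)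
        - (\<integral>q'. G (fst (Z2 s (snd q)) - fst (Z2 s (snd q'))) \<partial>\<pi>))
      \<le> H * norm (fst (Z1 s (fst q)) - fst (Z2 s (snd q)) - k)
        + H * (\<integral>q. tdist (fst (Z1 s (fst q))) (fst (Z2 s (snd q))) \<partial>\<pi>)"
      by (intro norm_force_diff_le[OF per grad lip \<open>prob_space \<pi>\<close>]) measurable
  qed
  also have "\<dots> = ennreal (min (mag_factor H t) (classical_factor H t)) * (\<integral>\<^sup>+p. ennreal (cost (fst p) (snd p)) \<partial>\<pi>)"
    by (simp add: Z1(1) Z2(1))
  finally show ?thesis .
qed

lemma W1_vb_solution_le:
  fixes K :: "'v \<Rightarrow> real" and \<mu>1 \<mu>2 :: "real \<Rightarrow> ('v \<times> 'v) measure"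
  assumes "periodic K" "\<forall>x. GDERIV K x :> G x" and lip: "\<forall>x y. norm (G x - G y) \<le> H * norm (x - y)"
    and "vb_solution G (\<lambda>v. \<omega> *\<^sub>R J v) \<mu>1" "vb_solution G (\<lambda>v. \<omega> *\<^sub>R J v) \<mu>2" and t: "0 \<le> t"
  shows "W1 (\<mu>1 t) (\<mu>2 t) \<le> ennreal (min (mag_factor H t) (classical_factor H t)) * W1 (\<mu>1 0) (\<mu>2 0)"
  unfolding W1_def[of "\<mu>1 0"]
proof (rule le_ennreal_mult_INF)
  show "0 < min (mag_factor H t) (classical_factor H t)"
    using mag_factor_ge_one classical_factor_ge_one lipschitz_const_nonneg[OF lip] t by fastforce
qed (rule W1_vb_solution_le_coupling[OF assms(1-5) _ t])

end

section \<open>The cases \<open>d = 2\<close> and \<open>d = 3\<close>\<close>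

lemma magnetic_rotation_plane:
  "0 < \<omega> \<Longrightarrow> magnetic_rotation \<omega> (\<lambda>v::real \<times> real. (snd v, - fst v)) (\<lambda>v. 0) 0"
  unfolding magnetic_rotation_def
  by (auto simp: inner_Pair zero_prod_def intro!: bounded_linear_Pair bounded_linear_fst
      bounded_linear_snd bounded_linear_minus)

lemma magnetic_rotation_space:
  "0 < \<omega> \<Longrightarrow> magnetic_rotation \<omega> (\<lambda>v::real \<times> real \<times> real. (fst (snd v), - fst v, 0))
    (\<lambda>v. (0, 0, snd (snd v))) 1"
  unfolding magnetic_rotation_def
  by (auto simp: inner_Pair zero_prod_def algebra_simps intro!: bounded_linear_Pair bounded_linear_fst
      bounded_linear_snd bounded_linear_minus bounded_linear_compose[OF bounded_linear_fst bounded_linear_snd]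
      bounded_linear_compose[OF bounded_linear_snd bounded_linear_snd])

corollary W1_vb_solution_le_plane:
  fixes K :: "real \<times> real \<Rightarrow> real" and \<mu>1 \<mu>2 :: "real \<Rightarrow> ((real \<times> real) \<times> (real \<times> real)) measure"
  assumes "0 < \<omega>" and hyps: "periodic K" "\<forall>x. GDERIV K x :> G x" "\<forall>x y. norm (G x - G y) \<le> H * norm (x - y)"
    and sols: "vb_solution G (mag2 \<omega>) \<mu>1" "vb_solution G (mag2 \<omega>) \<mu>2" and "0 \<le> t"
  shows "W1 (\<mu>1 t) (\<mu>2 t) \<le>
    ennreal (min ((sqrt (2 * (1 - cos (\<omega> * t)) / \<omega>\<^sup>2) + 1) *
                   exp (4 * H * (2 * (t - sin (\<omega> * t) / \<omega>) / \<omega>\<^sup>2 + t)))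
                 (exp ((1 + 2 * H) * t)))
    * W1 (\<mu>1 0) (\<mu>2 0)"
proof -
  interpret magnetic_rotation \<omega> "\<lambda>v::real \<times> real. (snd v, - fst v)" "\<lambda>v. 0" 0
    by (rule magnetic_rotation_plane[OF \<open>0 < \<omega>\<close>])
  have "mag2 \<omega> = (\<lambda>v. \<omega> *\<^sub>R (snd v, - fst v))"
    by (auto simp: mag2_def)
  with W1_vb_solution_le[OF hyps, of \<mu>1 \<mu>2 t] sols \<open>0 \<le> t\<close> show ?thesis
    unfolding mag_factor_def classical_factor_def alpha_def beta_def by (simp add: add.commute)
qed

corollary W1_vb_solution_le_space:
  fixes K :: "real \<times> real \<times> real \<Rightarrow> real"
    and \<mu>1 \<mu>2 :: "real \<Rightarrow> ((real \<times> real \<times> real) \<times> (real \<times> real \<times> real)) measure"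
  assumes "0 < \<omega>" and hyps: "periodic K" "\<forall>x. GDERIV K x :> G x" "\<forall>x y. norm (G x - G y) \<le> H * norm (x - y)"
    and sols: "vb_solution G (mag3 \<omega>) \<mu>1" "vb_solution G (mag3 \<omega>) \<mu>2" and "0 \<le> t"
  shows "W1 (\<mu>1 t) (\<mu>2 t) \<le>
    ennreal (min ((sqrt (2 * (1 - cos (\<omega> * t)) / \<omega>\<^sup>2 + t\<^sup>2) + 1) *
                   exp (4 * H * (2 * (t - sin (\<omega> * t) / \<omega>) / \<omega>\<^sup>2 + t ^ 3 / 3 + t)))
                 (exp ((1 + 2 * H) * t)))
    * W1 (\<mu>1 0) (\<mu>2 0)"
proof -
  interpret magnetic_rotation \<omega> "\<lambda>v::real \<times> real \<times> real. (fst (snd v), - fst v, 0)"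
    "\<lambda>v. (0, 0, snd (snd v))" 1
    by (rule magnetic_rotation_space[OF \<open>0 < \<omega>\<close>])
  have "mag3 \<omega> = (\<lambda>v. \<omega> *\<^sub>R (fst (snd v), - fst v, 0))"
    by (auto simp: mag3_def)
  with W1_vb_solution_le[OF hyps, of \<mu>1 \<mu>2 t] sols \<open>0 \<le> t\<close> show ?thesis
    unfolding mag_factor_def classical_factor_def alpha_def beta_def by (simp add: add.commute)
qed

theorem theorem3p1:
  fixes \<omega> H :: real
  assumes "\<omega> > 0"
  shows
   "(\<forall>(K :: real \<times> real \<Rightarrow> real) G (\<mu>1 :: real \<Rightarrow> ((real \<times> real) \<times> (real \<times> real)) measure) \<mu>2 t.
       periodic K \<and> (\<forall>x. GDERIV K x :> G x) \<and>
       (\<forall>x y. norm (G x - G y) \<le> H * norm (x - y)) \<and>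
       vb_solution G (mag2 \<omega>) \<mu>1 \<and> vb_solution G (mag2 \<omega>) \<mu>2 \<and> t \<ge> 0 \<longrightarrow>
       W1 (\<mu>1 t) (\<mu>2 t) \<le>
         ennreal (min ((sqrt (2 * (1 - cos (\<omega> * t)) / \<omega>\<^sup>2) + 1) *
                         exp (4 * H * (2 * (t - sin (\<omega> * t) / \<omega>) / \<omega>\<^sup>2 + t)))
                      (exp ((1 + 2 * H) * t)))
         * W1 (\<mu>1 0) (\<mu>2 0))
  \<and>
    (\<forall>(K :: real \<times> real \<times> real \<Rightarrow> real) G
         (\<mu>1 :: real \<Rightarrow> ((real \<times> real \<times> real) \<times> (real \<times> real \<times> real)) measure) \<mu>2 t.
       periodic K \<and> (\<forall>x. GDERIV K x :> G x) \<and>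
       (\<forall>x y. norm (G x - G y) \<le> H * norm (x - y)) \<and>
       vb_solution G (mag3 \<omega>) \<mu>1 \<and> vb_solution G (mag3 \<omega>) \<mu>2 \<and> t \<ge> 0 \<longrightarrow>
       W1 (\<mu>1 t) (\<mu>2 t) \<le>
         ennreal (min ((sqrt (2 * (1 - cos (\<omega> * t)) / \<omega>\<^sup>2 + t\<^sup>2) + 1) *
                         exp (4 * H * (2 * (t - sin (\<omega> * t) / \<omega>) / \<omega>\<^sup>2 + t ^ 3 / 3 + t)))
                      (exp ((1 + 2 * H) * t)))
         * W1 (\<mu>1 0) (\<mu>2 0))"
  using W1_vb_solution_le_plane[OF assms] W1_vb_solution_le_space[OF assms] by blast

end
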